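(* Let $f$ be a ternary cubic form, and fix $(u_1,u_2,u_3)\in\mathbb C^3$ such that the value $F_{6u}(u_1,u_2,u_3)$ is nonzero. The following are equivalent: (1) $f$ is completely reducible, i.e. a product of three linear forms; (2) $\Delta$ is a scalar multiple of $f$; (3) $\Pi$, evaluated at this fixed $u$, is the zero polynomial in $x$; (4) $\Gamma$, evaluated at this fixed $u$, is the zero polynomial in $x$.
   Context: All forms are homogeneous polynomials with complex coefficients in $x=(x_1,x_2,x_3)$, whose coefficients may also depend polynomially on auxiliary indeterminates $u=(u_1,u_2,u_3)$, with $u_x=u_1x_1+u_2x_2+u_3x_3$. For forms $f,g,h$ and $n\ge1$ the $n$-th transvectant is $J^n[f,g,h]=\big(\Omega^n(f(x)g(y)h(z))\big)\big|_{y=z=x}$, where $\Omega$ is the determinant of the $3\times3$ matrix of operators with rows $(\partial/\partial x_i)_i$, $(\partial/\partial y_i)_i$, $(\partial/\partial z_i)_i$. All derivatives are in $x,y,z$ only, with $u$ treated as a constant. Write $J=J^1$. For a ternary cubic $f$: - $\theta=\tfrac14J^2[f,f,u_x^2]$; - $\Delta=\tfrac1{12}J^2[f,f,f]$ (the Hessian); - $\Pi=\tfrac1{12}J[\Delta,f,u_x]$; - $\Gamma=\tfrac1{432}J^3[\Pi,f,u_x^3]$; - $F_{6u}=\tfrac1{3072}J^2[\theta,\theta,u_x^2]$, a form of degree 6 in $u$ only. *)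

theory Defs
  imports Complex_Main
begin

text \<open>Polynomials in x = (x1,x2,x3) with complex coefficients, represented by their
coefficient function on exponent triples (i,j,k), i.e. the coefficient of x1^i x2^j x3^k.\<close>

type_synonym mono = "nat \<times> nat \<times> nat"
type_synonym pol = "mono \<Rightarrow> complex"

definition pzero :: pol where "pzero = (\<lambda>_. 0)"

definition padd :: "pol \<Rightarrow> pol \<Rightarrow> pol" where
  "padd p q = (\<lambda>m. p m + q m)"

definition psmult :: "complex \<Rightarrow> pol \<Rightarrow> pol" where
  "psmult c p = (\<lambda>m. c * p m)"

definition pmult :: "pol \<Rightarrow> pol \<Rightarrow> pol" where
  "pmult p q = (\<lambda>(i,j,k). \<Sum>a\<le>i. \<Sum>b\<le>j. \<Sum>c\<le>k. p (a,b,c) * q (i-a, j-b, k-c))"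

definition mdeg :: "mono \<Rightarrow> nat" where
  "mdeg m = (case m of (i,j,k) \<Rightarrow> i + j + k)"

definition is_form :: "nat \<Rightarrow> pol \<Rightarrow> bool" where
  "is_form d p \<longleftrightarrow> (\<forall>m. p m \<noteq> 0 \<longrightarrow> mdeg m = d)"

text \<open>Formal partial derivative with respect to x_(i+1), i \<in> {0,1,2}\<close>
definition pderiv3 :: "nat \<Rightarrow> pol \<Rightarrow> pol" where
  "pderiv3 i p = (\<lambda>(a,b,c).
     if i = 0 then of_nat (a+1) * p (a+1,b,c)
     else if i = 1 then of_nat (b+1) * p (a,b+1,c)
     else of_nat (c+1) * p (a,b,c+1))"

text \<open>Terms (sign, column for x-row, column for y-row, column for z-row) of the
determinant Omega = sum over permutations sigma of sgn(sigma) d/dx_sigma(1) d/dy_sigma(2) d/dz_sigma(3).\<close>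
definition omega_terms :: "(complex \<times> nat \<times> nat \<times> nat) list" where
  "omega_terms = [(1,0,1,2), (-1,0,2,1), (-1,1,0,2), (1,1,2,0), (1,2,0,1), (-1,2,1,0)]"

text \<open>An element of C[x] (x) C[y] (x) C[z] is represented as a finite sum (list) of simple
tensors f(x) g(y) h(z); Omega acts on a simple tensor by differentiating each factor in its
own variables.\<close>
definition omega_step :: "(pol \<times> pol \<times> pol) list \<Rightarrow> (pol \<times> pol \<times> pol) list" where
  "omega_step ts = concat (map (\<lambda>(f,g,h).
      map (\<lambda>(s,i,j,k). (psmult s (pderiv3 i f), pderiv3 j g, pderiv3 k h)) omega_terms) ts)"

text \<open>n-th transvectant: apply Omega^n to f(x)g(y)h(z), then set y = z = x.\<close>
definition transv :: "nat \<Rightarrow> pol \<Rightarrow> pol \<Rightarrow> pol \<Rightarrow> pol" where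
  "transv n f g h = foldr padd (map (\<lambda>(a,b,c). pmult (pmult a b) c)
                                    ((omega_step ^^ n) [(f,g,h)])) pzero"

definition ux :: "complex \<Rightarrow> complex \<Rightarrow> complex \<Rightarrow> pol" where
  "ux u1 u2 u3 = (\<lambda>m. if m = (1,0,0) then u1 else if m = (0,1,0) then u2
                      else if m = (0,0,1) then u3 else 0)"

definition theta_u :: "pol \<Rightarrow> complex \<Rightarrow> complex \<Rightarrow> complex \<Rightarrow> pol" where
  "theta_u f u1 u2 u3 = psmult (1/4) (transv 2 f f (pmult (ux u1 u2 u3) (ux u1 u2 u3)))"

definition hessian :: "pol \<Rightarrow> pol" where
  "hessian f = psmult (1/12) (transv 2 f f f)"

definition Pi_u :: "pol \<Rightarrow> complex \<Rightarrow> complex \<Rightarrow> complex \<Rightarrow> pol" where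
  "Pi_u f u1 u2 u3 = psmult (1/12) (transv 1 (hessian f) f (ux u1 u2 u3))"

definition Gamma_u :: "pol \<Rightarrow> complex \<Rightarrow> complex \<Rightarrow> complex \<Rightarrow> pol" where
  "Gamma_u f u1 u2 u3 = psmult (1/432)
     (transv 3 (Pi_u f u1 u2 u3) f (pmult (ux u1 u2 u3) (pmult (ux u1 u2 u3) (ux u1 u2 u3))))"

text \<open>F_6u evaluated at u: J^2[theta,theta,u_x^2] has degree 0 in x; its value is its
constant coefficient.\<close>
definition F6u_val :: "pol \<Rightarrow> complex \<Rightarrow> complex \<Rightarrow> complex \<Rightarrow> complex" where
  "F6u_val f u1 u2 u3 = (1/3072) *
     transv 2 (theta_u f u1 u2 u3) (theta_u f u1 u2 u3) (pmult (ux u1 u2 u3) (ux u1 u2 u3)) (0,0,0)"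

definition completely_reducible :: "pol \<Rightarrow> bool" where
  "completely_reducible f \<longleftrightarrow>
     (\<exists>l1 l2 l3. is_form 1 l1 \<and> is_form 1 l2 \<and> is_form 1 l3 \<and> f = pmult (pmult l1 l2) l3)"

end

theory Submission
  imports Defs "HOL-Computational_Algebra.Formal_Power_Series" "HOL-Computational_Algebra.Fundamental_Theorem_Algebra"
begin

text \<open>The polynomials of the statement are transported into the ring of formal power series in
three variables, where partial derivatives are derivations. There the transvectant \<open>J\<^sup>n\<close> is
covariant: the linear substitution \<open>x \<mapsto> x A\<close> multiplies it by \<open>det A\<^sup>n\<close>.

(1) \<open>\<Rightarrow>\<close> (2): the Hessian of \<open>x\<^sub>1 x\<^sub>2 x\<^sub>3\<close> is \<open>x\<^sub>1 x\<^sub>2 x\<^sub>3\<close> itself, and every product of three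
linear forms is a linear substitution of \<open>x\<^sub>1 x\<^sub>2 x\<^sub>3\<close>, singular substitutions included.
(2) \<open>\<Rightarrow>\<close> (3): \<open>J[f, f, u\<^sub>x] = 0\<close> by antisymmetry. (3) \<open>\<Rightarrow>\<close> (4) is trivial.
(4) \<open>\<Rightarrow>\<close> (1): an invertible substitution moves \<open>u\<close> to \<open>(0,0,1)\<close>. Then \<open>F\<^sub>6\<^sub>u\<close> is a multiple of the
discriminant of the binary cubic \<open>f(x\<^sub>1,x\<^sub>2,0)\<close>, which therefore splits into three pairwise
independent linear factors. Lagrange interpolation chooses their \<open>x\<^sub>3\<close>-coefficients so that the
product agrees with \<open>f\<close> except possibly in the coefficients of \<open>x\<^sub>1x\<^sub>3\<^sup>2, x\<^sub>2x\<^sub>3\<^sup>2, x\<^sub>3\<^sup>3\<close>. These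
enter the three coefficients of \<open>\<Gamma>\<close> affinely, with slope \<open>16 F\<^sub>6\<^sub>u \<noteq> 0\<close>, and \<open>\<Gamma>\<close> vanishes both for
\<open>f\<close> and for the product, so they agree too.\<close>

section \<open>Trivariate power series\<close>

type_synonym ser3 = "complex fps fps fps"

definition coeff3 :: "ser3 \<Rightarrow> mono \<Rightarrow> complex" where
  "coeff3 F m = (case m of (i,j,k) \<Rightarrow> fps_nth (fps_nth (fps_nth F i) j) k)"

definition ser_of :: "pol \<Rightarrow> ser3" where
  "ser_of p = Abs_fps (\<lambda>i. Abs_fps (\<lambda>j. Abs_fps (\<lambda>k. p (i,j,k))))"

lemma coeff3_ser_of[simp]: "coeff3 (ser_of p) = p"
  by (auto simp: coeff3_def ser_of_def fun_eq_iff)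

lemma coeff3_inj: assumes "coeff3 F = coeff3 G" shows "F = G"
proof (intro fps_ext)
  fix i j k
  show "fps_nth (fps_nth (fps_nth F i) j) k = fps_nth (fps_nth (fps_nth G i) j) k"
    using fun_cong[OF assms, of "(i,j,k)"] by (simp add: coeff3_def)
qed

lemma ser_of_coeff3[simp]: "ser_of (coeff3 F) = F"
  by (rule coeff3_inj) simp

lemma ser_of_eq_iff: "ser_of p = ser_of q \<longleftrightarrow> p = q"
  by (metis coeff3_ser_of)

definition const3 :: "complex \<Rightarrow> ser3" where "const3 c = fps_const (fps_const (fps_const c))"

lemma coeff3_add[simp]: "coeff3 (F + G) m = coeff3 F m + coeff3 G m"
  by (simp add: coeff3_def split: prod.split)

lemma coeff3_diff[simp]: "coeff3 (F - G) m = coeff3 F m - coeff3 G m"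
  by (simp add: coeff3_def split: prod.split)

lemma coeff3_neg[simp]: "coeff3 (- F) m = - coeff3 F m"
  by (simp add: coeff3_def split: prod.split)

lemma coeff3_zero[simp]: "coeff3 0 m = 0"
  by (simp add: coeff3_def split: prod.split)

lemma coeff3_const3[simp]: "coeff3 (const3 c) m = (if m = (0,0,0) then c else 0)"
  by (simp add: coeff3_def const3_def split: prod.split)

lemma coeff3_one[simp]: "coeff3 1 m = (if m = (0,0,0) then 1 else 0)"
  using coeff3_const3[of 1 m] by (simp add: const3_def)

lemma coeff3_const3_mult[simp]: "coeff3 (const3 c * F) m = c * coeff3 F m"
  by (simp add: coeff3_def const3_def split: prod.split)

lemma coeff3_mult_const3[simp]: "coeff3 (F * const3 c) m = coeff3 F m * c"
  by (simp add: coeff3_def const3_def split: prod.split)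

lemma coeff3_sum: "coeff3 (sum f S) m = (\<Sum>x\<in>S. coeff3 (f x) m)"
  by (simp add: coeff3_def fps_sum_nth split: prod.split)

lemma coeff3_mult: "coeff3 (F * G) = pmult (coeff3 F) (coeff3 G)"
  by (auto simp: coeff3_def pmult_def fps_mult_nth fps_sum_nth atLeast0AtMost fun_eq_iff)

lemma const3_add[simp]: "const3 (a + b) = const3 a + const3 b" by (simp add: const3_def)
lemma const3_mult[simp]: "const3 (a * b) = const3 a * const3 b" by (simp add: const3_def)
lemma const3_0[simp]: "const3 0 = 0" by (simp add: const3_def)
lemma const3_1[simp]: "const3 1 = 1" by (simp add: const3_def)
lemma const3_neg[simp]: "const3 (- a) = - const3 a" by (simp add: const3_def)
lemma const3_diff[simp]: "const3 (a - b) = const3 a - const3 b" by (simp add: const3_def)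
lemma const3_pow[simp]: "const3 (a ^ n) = const3 a ^ n" by (simp add: const3_def)

lemma const3_numeral[simp]: "const3 (numeral n) = numeral n"
  by (simp add: const3_def fps_numeral_fps_const)

lemma const3_of_nat[simp]: "const3 (of_nat n) = of_nat n"
  by (simp add: const3_def fps_of_nat)

lemma const3_sum: "const3 (sum f S) = (\<Sum>x\<in>S. const3 (f x))"
  by (induct S rule: infinite_finite_induct) simp_all

lemma coeff3_const3_pow_mult[simp]: "coeff3 (const3 c ^ n * F) m = c ^ n * coeff3 F m"
  using coeff3_const3_mult[of "c ^ n" F m] by (simp del: coeff3_const3_mult)

lemma ser_of_padd[simp]: "ser_of (padd p q) = ser_of p + ser_of q"
  by (rule coeff3_inj) (simp add: padd_def fun_eq_iff)

lemma ser_of_pzero[simp]: "ser_of pzero = 0"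
  by (rule coeff3_inj) (simp add: pzero_def fun_eq_iff)

lemma ser_of_psmult[simp]: "ser_of (psmult c p) = const3 c * ser_of p"
  by (rule coeff3_inj) (simp add: psmult_def fun_eq_iff)

lemma ser_of_pmult[simp]: "ser_of (pmult p q) = ser_of p * ser_of q"
  by (rule coeff3_inj) (simp add: coeff3_mult)

definition X0 :: ser3 where "X0 = fps_X"
definition X1 :: ser3 where "X1 = fps_const fps_X"
definition X2 :: ser3 where "X2 = fps_const (fps_const fps_X)"

lemma coeff3_X0: "coeff3 X0 m = (if m = (1,0,0) then 1 else 0)"
  by (auto simp: coeff3_def X0_def fps_X_def split: prod.split)

lemma coeff3_X1: "coeff3 X1 m = (if m = (0,1,0) then 1 else 0)"
  by (auto simp: coeff3_def X1_def fps_X_def split: prod.split)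

lemma coeff3_X2: "coeff3 X2 m = (if m = (0,0,1) then 1 else 0)"
  by (auto simp: coeff3_def X2_def fps_X_def split: prod.split)

definition lin :: "complex \<Rightarrow> complex \<Rightarrow> complex \<Rightarrow> ser3" where
  "lin u1 u2 u3 = const3 u1 * X0 + const3 u2 * X1 + const3 u3 * X2"

lemma ser_of_ux: "ser_of (ux u1 u2 u3) = lin u1 u2 u3"
  by (rule coeff3_inj) (auto simp: lin_def ux_def coeff3_X0 coeff3_X1 coeff3_X2 fun_eq_iff)

section \<open>Partial derivatives\<close>

definition derivation :: "('a::comm_ring_1 \<Rightarrow> 'a) \<Rightarrow> bool" where
  "derivation D \<longleftrightarrow> (\<forall>a b. D (a + b) = D a + D b) \<and> (\<forall>a b. D (a * b) = D a * b + a * D b)"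

lemma derivation_fps_deriv: "derivation fps_deriv"
  by (simp add: derivation_def fps_deriv_mult)

definition fps_lift :: "('a \<Rightarrow> 'a) \<Rightarrow> 'a fps \<Rightarrow> 'a fps" where
  "fps_lift D F = Abs_fps (\<lambda>i. D (fps_nth F i))"

lemma derivation_sum:
  assumes "derivation D" shows "D (sum f S) = (\<Sum>x\<in>S. D (f x))"
proof -
  have "D 0 = 0" using assms unfolding derivation_def by (metis add_cancel_right_right)
  then show ?thesis
    using sum_comp_morphism[of D f S] assms by (simp add: derivation_def comp_def)
qed

lemma derivation_fps_lift:
  assumes D: "derivation D" shows "derivation (fps_lift D)"
  unfolding derivation_def
proof (intro conjI allI)
  fix F G :: "'a fps"
  show "fps_lift D (F + G) = fps_lift D F + fps_lift D G"
    using D by (intro fps_ext) (simp add: fps_lift_def derivation_def)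
  show "fps_lift D (F * G) = fps_lift D F * G + F * fps_lift D G"
  proof (rule fps_ext)
    fix n
    have "fps_nth (fps_lift D (F * G)) n = (\<Sum>i=0..n. D (fps_nth F i * fps_nth G (n - i)))"
      by (simp add: fps_lift_def fps_mult_nth derivation_sum[OF D])
    also have "\<dots> = (\<Sum>i=0..n. D (fps_nth F i) * fps_nth G (n - i))
        + (\<Sum>i=0..n. fps_nth F i * D (fps_nth G (n - i)))"
      using D by (simp add: derivation_def sum.distrib)
    also have "\<dots> = fps_nth (fps_lift D F * G + F * fps_lift D G) n"
      by (simp add: fps_lift_def fps_mult_nth)
    finally show "fps_nth (fps_lift D (F * G)) n = fps_nth (fps_lift D F * G + F * fps_lift D G) n" .
  qed
qed

definition partial :: "nat \<Rightarrow> ser3 \<Rightarrow> ser3" where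
  "partial i = (if i = 0 then fps_deriv else if i = 1 then fps_lift fps_deriv
                else fps_lift (fps_lift fps_deriv))"

lemma derivation_partial: "derivation (partial i)"
  by (simp add: partial_def derivation_fps_deriv derivation_fps_lift)

lemma partial_mult: "partial i (F * G) = partial i F * G + F * partial i G"
  using derivation_partial by (simp add: derivation_def)

lemma partial_sum: "partial i (sum f S) = (\<Sum>x\<in>S. partial i (f x))"
  by (rule derivation_sum[OF derivation_partial])

lemma coeff3_partial: "coeff3 (partial i F) = pderiv3 i (coeff3 F)"
  by (auto simp: partial_def coeff3_def pderiv3_def fps_lift_def fun_eq_iff fps_of_nat[symmetric])

lemma ser_of_pderiv3[simp]: "ser_of (pderiv3 i p) = partial i (ser_of p)"
  by (rule coeff3_inj) (simp add: coeff3_partial)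

lemma partial_add[simp]: "partial i (F + G) = partial i F + partial i G"
  by (rule coeff3_inj) (simp add: coeff3_partial pderiv3_def fun_eq_iff algebra_simps)

lemma partial_diff[simp]: "partial i (F - G) = partial i F - partial i G"
  by (rule coeff3_inj) (simp add: coeff3_partial pderiv3_def fun_eq_iff algebra_simps)

lemma partial_neg[simp]: "partial i (- F) = - partial i F"
  by (rule coeff3_inj) (simp add: coeff3_partial pderiv3_def fun_eq_iff algebra_simps)

lemma partial_zero[simp]: "partial i 0 = 0"
  by (rule coeff3_inj) (simp add: coeff3_partial pderiv3_def fun_eq_iff algebra_simps)

lemma partial_const3[simp]: "partial i (const3 c) = 0"
  by (rule coeff3_inj) (simp add: coeff3_partial pderiv3_def fun_eq_iff algebra_simps)

lemma partial_const3_mult[simp]: "partial i (const3 c * F) = const3 c * partial i F"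
  by (rule coeff3_inj) (simp add: coeff3_partial pderiv3_def fun_eq_iff mult_ac)

lemma partial_one[simp]: "partial i 1 = 0" using partial_const3[of i 1] by simp
lemma partial_numeral[simp]: "partial i (numeral n) = 0" using partial_const3[of i "numeral n"] by simp
lemma partial_of_nat[simp]: "partial i (of_nat n) = 0" using partial_const3[of i "of_nat n"] by simp

lemma partial_power: "partial i (F ^ n) = of_nat n * F ^ (n - 1) * partial i F"
proof (induct n)
  case 0 then show ?case by simp
next
  case (Suc n) then show ?case
    by (cases n) (simp_all add: partial_mult algebra_simps)
qed

lemma partial_var[simp]:
  "partial k X0 = (if k = 0 then 1 else 0)" "partial k X1 = (if k = 1 then 1 else 0)"
  "partial k X2 = (if k \<ge> 2 then 1 else 0)"
  by (rule coeff3_inj, auto simp: coeff3_partial fun_eq_iff pderiv3_def coeff3_X0 coeff3_X1 coeff3_X2)+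

lemma partial_ge2: "r \<ge> 2 \<Longrightarrow> partial r F = partial 2 F"
  by (simp add: partial_def)

section \<open>Transvectants\<close>

fun transvectant :: "nat \<Rightarrow> ser3 \<Rightarrow> ser3 \<Rightarrow> ser3 \<Rightarrow> ser3" where
  "transvectant 0 F G H = F * G * H"
| "transvectant (Suc n) F G H =
     transvectant n (partial 0 F) (partial 1 G) (partial 2 H) - transvectant n (partial 0 F) (partial 2 G) (partial 1 H)
   - transvectant n (partial 1 F) (partial 0 G) (partial 2 H) + transvectant n (partial 1 F) (partial 2 G) (partial 0 H)
   + transvectant n (partial 2 F) (partial 0 G) (partial 1 H) - transvectant n (partial 2 F) (partial 1 G) (partial 0 H)"

lemma transvectant_add1: "transvectant n (F + F') G H = transvectant n F G H + transvectant n F' G H"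
  by (induct n arbitrary: F F' G H) (simp_all add: algebra_simps)

lemma transvectant_add2: "transvectant n F (G + G') H = transvectant n F G H + transvectant n F G' H"
  by (induct n arbitrary: F G G' H) (simp_all add: algebra_simps)

lemma transvectant_add3: "transvectant n F G (H + H') = transvectant n F G H + transvectant n F G H'"
  by (induct n arbitrary: F G H H') (simp_all add: algebra_simps)

lemma transvectant_const1: "transvectant n (const3 c * F) G H = const3 c * transvectant n F G H"
  by (induct n arbitrary: F G H) (simp_all add: distrib_left right_diff_distrib mult.assoc mult.left_commute[of "const3 c"])

lemma transvectant_const2: "transvectant n F (const3 c * G) H = const3 c * transvectant n F G H"
  by (induct n arbitrary: F G H) (simp_all add: distrib_left right_diff_distrib mult.assoc mult.left_commute[of "const3 c"])

lemma transvectant_const3: "transvectant n F G (const3 c * H) = const3 c * transvectant n F G H"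
  by (induct n arbitrary: F G H) (simp_all add: distrib_left right_diff_distrib mult.assoc mult.left_commute[of "const3 c"])

lemma transvectant_zero1[simp]: "transvectant n 0 G H = 0"
  by (induct n arbitrary: G H) simp_all

lemma transvectant_zero2[simp]: "transvectant n F 0 H = 0"
  by (induct n arbitrary: F H) simp_all

lemma transvectant_zero3[simp]: "transvectant n F G 0 = 0"
  by (induct n arbitrary: F G) simp_all

lemma transvectant_neg1: "transvectant n (- F) G H = - transvectant n F G H"
  using transvectant_const1[of n "-1" F G H] by simp

lemma transvectant_neg2: "transvectant n F (- G) H = - transvectant n F G H"
  using transvectant_const2[of n F "-1" G H] by simp

lemma transvectant_neg3: "transvectant n F G (- H) = - transvectant n F G H"
  using transvectant_const3[of n F G "-1" H] by simp

lemma transvectant_diff1: "transvectant n (F - F') G H = transvectant n F G H - transvectant n F' G H"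
  using transvectant_add1[of n F "- F'"] transvectant_neg1 by simp

lemma transvectant_diff2: "transvectant n F (G - G') H = transvectant n F G H - transvectant n F G' H"
  using transvectant_add2[of n F G "- G'"] transvectant_neg2 by simp

lemma transvectant_diff3: "transvectant n F G (H - H') = transvectant n F G H - transvectant n F G H'"
  using transvectant_add3[of n F G H "- H'"] transvectant_neg3 by simp

lemmas transvectant_lin = transvectant_add1 transvectant_add2 transvectant_add3 transvectant_const1 transvectant_const2 transvectant_const3
  transvectant_neg1 transvectant_neg2 transvectant_neg3 transvectant_diff1 transvectant_diff2 transvectant_diff3

lemma ser_of_foldr: "ser_of (foldr padd (map \<phi> ts) pzero) = sum_list (map (ser_of \<circ> \<phi>) ts)"
  by (induct ts) simp_all

lemma omega_step_append: "omega_step (xs @ ys) = omega_step xs @ omega_step ys"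
  by (simp add: omega_step_def)

lemma sum_list_omega_step:
  "sum_list (map (\<lambda>(a,b,c). transvectant n (ser_of a) (ser_of b) (ser_of c)) (omega_step ts))
   = sum_list (map (\<lambda>(a,b,c). transvectant (Suc n) (ser_of a) (ser_of b) (ser_of c)) ts)"
proof (induct ts)
  case Nil then show ?case by (simp add: omega_step_def)
next
  case (Cons t ts)
  obtain a b c where t: "t = (a,b,c)" by (cases t) auto
  have "omega_step (t # ts) = omega_step [t] @ omega_step ts"
    using omega_step_append[of "[t]" ts] by simp
  then show ?case using Cons
    by (simp add: t omega_step_def omega_terms_def transvectant_lin algebra_simps)
qed

lemma sum_list_omega_step_funpow:
  "sum_list (map (\<lambda>(a,b,c). ser_of a * ser_of b * ser_of c) ((omega_step ^^ n) ts))
   = sum_list (map (\<lambda>(a,b,c). transvectant n (ser_of a) (ser_of b) (ser_of c)) ts)"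
proof (induct n arbitrary: ts)
  case 0 then show ?case by simp
next
  case (Suc n)
  have "(omega_step ^^ Suc n) ts = (omega_step ^^ n) (omega_step ts)"
    by (simp only: funpow_Suc_right o_apply)
  then show ?case using Suc sum_list_omega_step by simp
qed

lemma ser_of_transv: "ser_of (transv n f g h) = transvectant n (ser_of f) (ser_of g) (ser_of h)"
proof -
  have "ser_of (transv n f g h) = sum_list (map (\<lambda>(a,b,c). ser_of a * ser_of b * ser_of c) ((omega_step ^^ n) [(f,g,h)]))"
    unfolding transv_def ser_of_foldr by (rule arg_cong[where f=sum_list]) (auto simp: fun_eq_iff)
  then show ?thesis using sum_list_omega_step_funpow[of n "[(f,g,h)]"] by simp
qed

section \<open>Monomials and linear substitution\<close>

definition support :: "ser3 \<Rightarrow> mono set" where "support F = {m. coeff3 F m \<noteq> 0}"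
definition finsupp :: "ser3 \<Rightarrow> bool" where "finsupp F \<longleftrightarrow> finite (support F)"
definition mono_ser :: "mono \<Rightarrow> ser3" where "mono_ser m = (case m of (i,j,k) \<Rightarrow> X0^i * X1^j * X2^k)"

definition mono_add :: "mono \<Rightarrow> mono \<Rightarrow> mono" where
  "mono_add m n = (case m of (a,b,c) \<Rightarrow> case n of (d,e,f) \<Rightarrow> (a+d, b+e, c+f))"

lemma coeff3_mono_ser: "coeff3 (mono_ser m) n = (if n = m then 1 else 0)"
  by (auto simp: coeff3_def mono_ser_def X0_def X1_def X2_def fps_X_power_mult_nth mult.assoc split: prod.split)

lemma mono_ser_mono_add: "mono_ser (mono_add m n) = mono_ser m * mono_ser n"
  by (auto simp: mono_ser_def mono_add_def power_add mult_ac split: prod.split)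

lemma ser_eq_sum_mono_ser: assumes "finite M" "support F \<subseteq> M"
  shows "F = (\<Sum>m\<in>M. const3 (coeff3 F m) * mono_ser m)"
proof (rule coeff3_inj, rule ext)
  fix n
  have "coeff3 (\<Sum>m\<in>M. const3 (coeff3 F m) * mono_ser m) n = (\<Sum>m\<in>M. if n = m then coeff3 F m else 0)"
    by (auto simp: coeff3_sum coeff3_mono_ser intro!: sum.cong)
  also have "\<dots> = (if n \<in> M then coeff3 F n else 0)"
    using assms(1) by (simp add: sum.delta)
  also have "\<dots> = coeff3 F n" using assms(2) by (auto simp: support_def)
  finally show "coeff3 F n = coeff3 (\<Sum>m\<in>M. const3 (coeff3 F m) * mono_ser m) n" by simp
qed

lemma support_sum: "support (sum f I) \<subseteq> (\<Union>i\<in>I. support (f i))"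
proof
  fix n assume "n \<in> support (sum f I)"
  then have "(\<Sum>i\<in>I. coeff3 (f i) n) \<noteq> 0" by (simp add: support_def coeff3_sum)
  then obtain i where "i \<in> I" "coeff3 (f i) n \<noteq> 0" by (meson sum.neutral)
  then show "n \<in> (\<Union>i\<in>I. support (f i))" by (auto simp: support_def)
qed

lemma finsupp_sum: "finite I \<Longrightarrow> (\<And>i. i \<in> I \<Longrightarrow> finsupp (f i)) \<Longrightarrow> finsupp (sum f I)"
  unfolding finsupp_def by (rule finite_subset[OF support_sum]) auto

lemma finsupp_const3_mono_ser[simp]: "finsupp (const3 a * mono_ser m)"
proof -
  have "support (const3 a * mono_ser m) \<subseteq> {m}" by (auto simp: support_def coeff3_mono_ser)
  then show ?thesis unfolding finsupp_def using finite_subset by blast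
qed

lemma finsupp_add[simp]: "finsupp F \<Longrightarrow> finsupp G \<Longrightarrow> finsupp (F + G)"
  unfolding finsupp_def by (rule finite_subset[of _ "support F \<union> support G"]) (auto simp: support_def)

lemma finsupp_const3_mult[simp]: "finsupp F \<Longrightarrow> finsupp (const3 c * F)"
  unfolding finsupp_def by (rule finite_subset[of _ "support F"]) (auto simp: support_def)

lemma finsupp_neg[simp]: "finsupp F \<Longrightarrow> finsupp (- F)"
  unfolding finsupp_def by (simp add: support_def)

lemma finsupp_diff[simp]: "finsupp F \<Longrightarrow> finsupp G \<Longrightarrow> finsupp (F - G)"
  unfolding finsupp_def by (rule finite_subset[of _ "support F \<union> support G"]) (auto simp: support_def)

lemma finsupp_zero[simp]: "finsupp 0" unfolding finsupp_def support_def by simp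

lemma finsupp_eq_sum_mono_ser: "finsupp F \<Longrightarrow> F = (\<Sum>m\<in>support F. const3 (coeff3 F m) * mono_ser m)"
  by (rule ser_eq_sum_mono_ser) (auto simp: finsupp_def)

lemma mult_eq_sum_mono_ser:
  assumes "finsupp F" "finsupp G"
  shows "F * G = (\<Sum>p\<in>support F \<times> support G. const3 (coeff3 F (fst p) * coeff3 G (snd p)) * mono_ser (mono_add (fst p) (snd p)))"
proof -
  have "F * G = (\<Sum>m\<in>support F. const3 (coeff3 F m) * mono_ser m) * (\<Sum>m\<in>support G. const3 (coeff3 G m) * mono_ser m)"
    using finsupp_eq_sum_mono_ser[OF assms(1)] finsupp_eq_sum_mono_ser[OF assms(2)] by simp
  also have "\<dots> = (\<Sum>m\<in>support F. \<Sum>m'\<in>support G. const3 (coeff3 F m) * mono_ser m * (const3 (coeff3 G m') * mono_ser m'))"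
    by (simp add: sum_product)
  also have "\<dots> = (\<Sum>p\<in>support F \<times> support G. const3 (coeff3 F (fst p)) * mono_ser (fst p) * (const3 (coeff3 G (snd p)) * mono_ser (snd p)))"
    by (simp add: sum.cartesian_product case_prod_beta)
  also have "\<dots> = (\<Sum>p\<in>support F \<times> support G. const3 (coeff3 F (fst p) * coeff3 G (snd p)) * mono_ser (mono_add (fst p) (snd p)))"
    by (simp add: mono_ser_mono_add mult_ac)
  finally show ?thesis .
qed

lemma finsupp_mult[simp]: assumes "finsupp F" "finsupp G" shows "finsupp (F * G)"
  unfolding mult_eq_sum_mono_ser[OF assms]
  by (rule finsupp_sum) (use assms in \<open>simp add: finsupp_def\<close>, simp del: const3_mult)

lemma finsupp_const3[simp]: "finsupp (const3 c)"
  using finsupp_const3_mono_ser[of c "(0,0,0)"] by (simp add: mono_ser_def)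

lemma finsupp_one[simp]: "finsupp 1" using finsupp_const3[of 1] by simp
lemma finsupp_mono_ser[simp]: "finsupp (mono_ser m)" using finsupp_const3_mono_ser[of 1 m] by simp

lemma finsupp_var[simp]: "finsupp X0" "finsupp X1" "finsupp X2"
  using finsupp_mono_ser[of "(1,0,0)"] finsupp_mono_ser[of "(0,1,0)"] finsupp_mono_ser[of "(0,0,1)"] by (simp_all add: mono_ser_def)

lemma finsupp_power[simp]: "finsupp F \<Longrightarrow> finsupp (F ^ n)"
  by (induct n) simp_all

definition mono_exp :: "mono \<Rightarrow> nat \<Rightarrow> nat" where
  "mono_exp m r = (case m of (a,b,c) \<Rightarrow> if r = 0 then a else if r = 1 then b else c)"

text \<open>For a zero exponent the truncated subtraction in \<open>mono_dec\<close> is harmless: the factor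
  \<open>mono_exp\<close> in front of it vanishes.\<close>

definition mono_dec :: "mono \<Rightarrow> nat \<Rightarrow> mono" where
  "mono_dec m r = (case m of (a,b,c) \<Rightarrow> if r = 0 then (a-1,b,c) else if r = 1 then (a,b-1,c) else (a,b,c-1))"

lemma partial_mono_ser: "partial r (mono_ser m) = const3 (of_nat (mono_exp m r)) * mono_ser (mono_dec m r)"
proof -
  obtain a b c where m: "m = (a,b,c)" by (cases m) auto
  consider "r = 0" | "r = 1" | "r \<ge> 2" by linarith
  then show ?thesis
  proof cases
    case 1 then show ?thesis by (simp add: m mono_ser_def mono_exp_def mono_dec_def partial_mult partial_power mult_ac)
  next
    case 2 then show ?thesis by (simp add: m mono_ser_def mono_exp_def mono_dec_def partial_mult partial_power mult_ac)
  next
    case 3 then show ?thesis by (simp add: partial_ge2[OF 3] m mono_ser_def mono_exp_def mono_dec_def partial_mult partial_power mult_ac)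
  qed
qed

lemma partial_eq_sum_mono_ser: assumes "finsupp F"
  shows "partial r F = (\<Sum>m\<in>support F. const3 (coeff3 F m * of_nat (mono_exp m r)) * mono_ser (mono_dec m r))"
proof -
  have "partial r F = partial r (\<Sum>m\<in>support F. const3 (coeff3 F m) * mono_ser m)"
    using finsupp_eq_sum_mono_ser[OF assms] by (rule arg_cong)
  also have "\<dots> = (\<Sum>m\<in>support F. const3 (coeff3 F m * of_nat (mono_exp m r)) * mono_ser (mono_dec m r))"
    by (simp only: partial_sum partial_const3_mult partial_mono_ser const3_mult mult.assoc)
  finally show ?thesis .
qed

lemma finsupp_partial[simp]: assumes "finsupp F" shows "finsupp (partial r F)"
proof -
  have "finsupp (\<Sum>m\<in>support F. const3 (coeff3 F m * of_nat (mono_exp m r)) * mono_ser (mono_dec m r))"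
    by (rule finsupp_sum) (use assms in \<open>simp add: finsupp_def\<close>, simp del: const3_mult)
  then show ?thesis using partial_eq_sum_mono_ser[OF assms] by simp
qed

lemma finsupp_transvectant[simp]: "finsupp F \<Longrightarrow> finsupp G \<Longrightarrow> finsupp H \<Longrightarrow> finsupp (transvectant n F G H)"
  by (induct n arbitrary: F G H) simp_all

text \<open>A \<open>3 \<times> 3\<close> matrix is a function \<open>nat \<Rightarrow> nat \<Rightarrow> complex\<close> of which only the entries with
  indices below 3 matter; \<open>lsubst A\<close> substitutes the linear form in row \<open>r\<close> of \<open>A\<close> for \<open>x\<^sub>r\<close>.\<close>

definition row_form :: "(nat \<Rightarrow> nat \<Rightarrow> complex) \<Rightarrow> nat \<Rightarrow> ser3" where
  "row_form A r = lin (A r 0) (A r 1) (A r 2)"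

definition row_monom :: "(nat \<Rightarrow> nat \<Rightarrow> complex) \<Rightarrow> mono \<Rightarrow> ser3" where
  "row_monom A m = (case m of (i,j,k) \<Rightarrow> row_form A 0 ^ i * row_form A 1 ^ j * row_form A 2 ^ k)"

definition lsubst :: "(nat \<Rightarrow> nat \<Rightarrow> complex) \<Rightarrow> ser3 \<Rightarrow> ser3" where
  "lsubst A F = (\<Sum>m\<in>support F. const3 (coeff3 F m) * row_monom A m)"

lemma lsubst_sum_mono_ser: assumes "finite I"
  shows "lsubst A (\<Sum>i\<in>I. const3 (f i) * mono_ser (mm i)) = (\<Sum>i\<in>I. const3 (f i) * row_monom A (mm i))"
proof -
  let ?F = "\<Sum>i\<in>I. const3 (f i) * mono_ser (mm i)"
  have cfF: "coeff3 ?F n = (\<Sum>i\<in>{i\<in>I. mm i = n}. f i)" for n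
  proof -
    have "coeff3 ?F n = (\<Sum>i\<in>I. if mm i = n then f i else 0)"
      by (auto simp: coeff3_sum coeff3_mono_ser intro!: sum.cong)
    also have "\<dots> = (\<Sum>i\<in>{i\<in>I. mm i = n}. f i)"
      using assms by (simp add: sum.inter_filter)
    finally show ?thesis .
  qed
  have support: "support ?F \<subseteq> mm ` I"
  proof
    fix n assume "n \<in> support ?F"
    then have "(\<Sum>i\<in>{i\<in>I. mm i = n}. f i) \<noteq> 0" by (simp add: support_def cfF)
    then obtain i where "i \<in> {i\<in>I. mm i = n}" by (meson sum.neutral)
    then show "n \<in> mm ` I" by auto
  qed
  have "lsubst A ?F = (\<Sum>n\<in>mm ` I. const3 (coeff3 ?F n) * row_monom A n)"
    unfolding lsubst_def by (rule sum.mono_neutral_left) (use assms support in \<open>auto simp: support_def\<close>)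
  also have "\<dots> = (\<Sum>n\<in>mm ` I. \<Sum>i\<in>{i\<in>I. mm i = n}. const3 (f i) * row_monom A (mm i))"
  proof (rule sum.cong)
    fix n assume "n \<in> mm ` I"
    have "const3 (coeff3 ?F n) * row_monom A n = (\<Sum>i\<in>{i\<in>I. mm i = n}. const3 (f i) * row_monom A n)"
      by (simp add: cfF const3_sum sum_distrib_right)
    also have "\<dots> = (\<Sum>i\<in>{i\<in>I. mm i = n}. const3 (f i) * row_monom A (mm i))"
      by (rule sum.cong) auto
    finally show "const3 (coeff3 ?F n) * row_monom A n = (\<Sum>i\<in>{i\<in>I. mm i = n}. const3 (f i) * row_monom A (mm i))" .
  qed simp
  also have "\<dots> = (\<Sum>i\<in>I. const3 (f i) * row_monom A (mm i))"
    by (rule sum.image_gen[symmetric]) (rule assms)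
  finally show ?thesis .
qed

lemma lsubst_eq_sum_row_monom: assumes "finite M" "support F \<subseteq> M"
  shows "lsubst A F = (\<Sum>m\<in>M. const3 (coeff3 F m) * row_monom A m)"
proof -
  have "lsubst A F = lsubst A (\<Sum>m\<in>M. const3 (coeff3 F m) * mono_ser m)"
    using ser_eq_sum_mono_ser[OF assms] by (rule arg_cong)
  also have "\<dots> = (\<Sum>m\<in>M. const3 (coeff3 F m) * row_monom A m)"
    using lsubst_sum_mono_ser[OF assms(1), of A "coeff3 F" "\<lambda>m. m"] by simp
  finally show ?thesis .
qed

lemma lsubst_add: assumes "finsupp F" "finsupp G" shows "lsubst A (F + G) = lsubst A F + lsubst A G"
proof -
  let ?M = "support F \<union> support G"
  have fin: "finite ?M" using assms by (simp add: finsupp_def)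
  have "lsubst A (F + G) = (\<Sum>m\<in>?M. const3 (coeff3 (F + G) m) * row_monom A m)"
    by (rule lsubst_eq_sum_row_monom[OF fin]) (auto simp: support_def)
  also have "\<dots> = (\<Sum>m\<in>?M. const3 (coeff3 F m) * row_monom A m) + (\<Sum>m\<in>?M. const3 (coeff3 G m) * row_monom A m)"
    by (simp add: distrib_right sum.distrib)
  also have "\<dots> = lsubst A F + lsubst A G"
    by (simp add: lsubst_eq_sum_row_monom[OF fin, symmetric])
  finally show ?thesis .
qed

lemma lsubst_const3_mult: assumes "finsupp F" shows "lsubst A (const3 c * F) = const3 c * lsubst A F"
proof -
  have fin: "finite (support F)" using assms by (simp add: finsupp_def)
  have "lsubst A (const3 c * F) = (\<Sum>m\<in>support F. const3 (coeff3 (const3 c * F) m) * row_monom A m)"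
    by (rule lsubst_eq_sum_row_monom[OF fin]) (auto simp: support_def)
  also have "\<dots> = const3 c * lsubst A F"
    by (simp add: lsubst_eq_sum_row_monom[OF fin subset_refl] sum_distrib_left mult.assoc)
  finally show ?thesis .
qed

lemma lsubst_neg: "finsupp F \<Longrightarrow> lsubst A (- F) = - lsubst A F"
  using lsubst_const3_mult[of F A "-1"] by simp

lemma lsubst_diff: "finsupp F \<Longrightarrow> finsupp G \<Longrightarrow> lsubst A (F - G) = lsubst A F - lsubst A G"
  using lsubst_add[of F "- G" A] lsubst_neg[of G A] by simp

lemma lsubst_zero[simp]: "lsubst A 0 = 0" by (simp add: lsubst_def support_def)

lemma row_monom_mono_add: "row_monom A (mono_add m n) = row_monom A m * row_monom A n"
  by (auto simp: row_monom_def mono_add_def power_add mult_ac split: prod.split)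

lemma lsubst_mult: assumes "finsupp F" "finsupp G" shows "lsubst A (F * G) = lsubst A F * lsubst A G"
proof -
  have fin: "finite (support F)" "finite (support G)" using assms by (simp_all add: finsupp_def)
  have "lsubst A (F * G) = (\<Sum>p\<in>support F \<times> support G. const3 (coeff3 F (fst p) * coeff3 G (snd p)) * row_monom A (mono_add (fst p) (snd p)))"
    using mult_eq_sum_mono_ser[OF assms] lsubst_sum_mono_ser[of "support F \<times> support G" A "\<lambda>p. coeff3 F (fst p) * coeff3 G (snd p)" "\<lambda>p. mono_add (fst p) (snd p)"] fin
    by (simp del: const3_mult)
  also have "\<dots> = (\<Sum>m\<in>support F. \<Sum>m'\<in>support G. const3 (coeff3 F m) * row_monom A m * (const3 (coeff3 G m') * row_monom A m'))"
    by (simp add: sum.cartesian_product case_prod_beta row_monom_mono_add mult_ac)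
  also have "\<dots> = lsubst A F * lsubst A G"
    by (simp add: lsubst_def sum_product)
  finally show ?thesis .
qed

lemma lsubst_const3[simp]: "lsubst A (const3 c) = const3 c"
proof -
  have "lsubst A (const3 c) = (\<Sum>m\<in>{(0,0,0)}. const3 (coeff3 (const3 c) m) * row_monom A m)"
    by (rule lsubst_eq_sum_row_monom) (auto simp: support_def)
  then show ?thesis by (simp add: row_monom_def)
qed

lemma lsubst_one[simp]: "lsubst A 1 = 1" using lsubst_const3[of A 1] by simp

lemma lsubst_mono_ser[simp]: "lsubst A (mono_ser m) = row_monom A m"
proof -
  have "lsubst A (mono_ser m) = (\<Sum>n\<in>{m}. const3 (coeff3 (mono_ser m) n) * row_monom A n)"
    by (rule lsubst_eq_sum_row_monom) (auto simp: support_def coeff3_mono_ser)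
  then show ?thesis by (simp add: coeff3_mono_ser)
qed

lemma lsubst_var[simp]: "lsubst A X0 = row_form A 0" "lsubst A X1 = row_form A 1" "lsubst A X2 = row_form A 2"
  using lsubst_mono_ser[of A "(1,0,0)"] lsubst_mono_ser[of A "(0,1,0)"] lsubst_mono_ser[of A "(0,0,1)"]
  by (simp_all add: mono_ser_def row_monom_def)

lemma lsubst_power: "finsupp F \<Longrightarrow> lsubst A (F ^ n) = lsubst A F ^ n"
  by (induct n) (simp_all add: lsubst_mult)

lemma partial_row_form: assumes "k \<le> 2" shows "partial k (row_form A r) = const3 (A r k)"
proof -
  consider "k = 0" | "k = 1" | "k = 2" using assms by linarith
  then show ?thesis by cases (simp_all add: row_form_def lin_def)
qed

lemma partial_row_monom: assumes "k \<le> 2"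
  shows "partial k (row_monom A m) = const3 (of_nat (mono_exp m 0) * A 0 k) * row_monom A (mono_dec m 0)
     + const3 (of_nat (mono_exp m 1) * A 1 k) * row_monom A (mono_dec m 1) + const3 (of_nat (mono_exp m 2) * A 2 k) * row_monom A (mono_dec m 2)"
proof -
  obtain a b c where m: "m = (a,b,c)" by (cases m) auto
  show ?thesis using assms
    by (simp add: m row_monom_def mono_exp_def mono_dec_def partial_mult partial_power partial_row_form algebra_simps)
qed

lemma lsubst_partial: assumes "finsupp F"
  shows "lsubst A (partial r F) = (\<Sum>m\<in>support F. const3 (coeff3 F m * of_nat (mono_exp m r)) * row_monom A (mono_dec m r))"
  using partial_eq_sum_mono_ser[OF assms, of r] lsubst_sum_mono_ser[of "support F" A "\<lambda>m. coeff3 F m * of_nat (mono_exp m r)" "\<lambda>m. mono_dec m r"] assms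
  by (simp add: finsupp_def del: const3_mult)

lemma partial_lsubst: assumes "finsupp F" "k \<le> 2"
  shows "partial k (lsubst A F) = const3 (A 0 k) * lsubst A (partial 0 F) + const3 (A 1 k) * lsubst A (partial 1 F) + const3 (A 2 k) * lsubst A (partial 2 F)"
proof -
  have "partial k (lsubst A F) = (\<Sum>m\<in>support F. const3 (coeff3 F m) * partial k (row_monom A m))"
    by (simp add: lsubst_def partial_sum)
  also have "\<dots> = (\<Sum>m\<in>support F. const3 (A 0 k) * (const3 (coeff3 F m * of_nat (mono_exp m 0)) * row_monom A (mono_dec m 0))
     + const3 (A 1 k) * (const3 (coeff3 F m * of_nat (mono_exp m 1)) * row_monom A (mono_dec m 1))
     + const3 (A 2 k) * (const3 (coeff3 F m * of_nat (mono_exp m 2)) * row_monom A (mono_dec m 2)))"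
    by (rule sum.cong) (simp_all only: partial_row_monom[OF assms(2)] const3_mult algebra_simps)
  also have "\<dots> = const3 (A 0 k) * lsubst A (partial 0 F) + const3 (A 1 k) * lsubst A (partial 1 F) + const3 (A 2 k) * lsubst A (partial 2 F)"
    by (simp only: lsubst_partial[OF assms(1)] sum.distrib sum_distrib_left)
  finally show ?thesis .
qed

definition det3 :: "(nat \<Rightarrow> nat \<Rightarrow> complex) \<Rightarrow> complex" where
  "det3 A = A 0 0 * A 1 1 * A 2 2 - A 0 0 * A 1 2 * A 2 1 - A 0 1 * A 1 0 * A 2 2
          + A 0 1 * A 1 2 * A 2 0 + A 0 2 * A 1 0 * A 2 1 - A 0 2 * A 1 1 * A 2 0"

lemma transvectant_lsubst: assumes "finsupp F" "finsupp G" "finsupp H"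
  shows "transvectant n (lsubst A F) (lsubst A G) (lsubst A H) = const3 (det3 A ^ n) * lsubst A (transvectant n F G H)"
  using assms
proof (induct n arbitrary: F G H)
  case 0 then show ?case by (simp add: lsubst_mult)
next
  case (Suc n)
  have key: "\<And>P Q R. finsupp P \<Longrightarrow> finsupp Q \<Longrightarrow> finsupp R \<Longrightarrow>
     transvectant n (lsubst A P) (lsubst A Q) (lsubst A R) = const3 (det3 A ^ n) * lsubst A (transvectant n P Q R)"
    using Suc.hyps by blast
  have k2: "0 \<le> (2::nat)" "1 \<le> (2::nat)" "2 \<le> (2::nat)" by simp_all
  have fs: "finsupp F" "finsupp G" "finsupp H" by fact+
  have Cd: "const3 (det3 A ^ Suc n) = (const3 (A 0 0) * const3 (A 1 1) * const3 (A 2 2) - const3 (A 0 0) * const3 (A 1 2) * const3 (A 2 1) - const3 (A 0 1) * const3 (A 1 0) * const3 (A 2 2)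
          + const3 (A 0 1) * const3 (A 1 2) * const3 (A 2 0) + const3 (A 0 2) * const3 (A 1 0) * const3 (A 2 1) - const3 (A 0 2) * const3 (A 1 1) * const3 (A 2 0)) * const3 (det3 A ^ n)"
    by (simp only: power_Suc const3_mult det3_def const3_add const3_diff)
  note chain_rule = partial_lsubst[OF fs(1) k2(1)] partial_lsubst[OF fs(1) k2(2)] partial_lsubst[OF fs(1) k2(3)]
    partial_lsubst[OF fs(2) k2(1)] partial_lsubst[OF fs(2) k2(2)] partial_lsubst[OF fs(2) k2(3)]
    partial_lsubst[OF fs(3) k2(1)] partial_lsubst[OF fs(3) k2(2)] partial_lsubst[OF fs(3) k2(3)]
  \<comment> \<open>after the chain rule the terms regroup into \<open>det3 A\<close> times the six terms of \<open>\<Omega>\<close>\<close>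
  show ?case
    unfolding transvectant.simps chain_rule transvectant_lin
    by (simp only: key finsupp_partial fs Cd lsubst_add lsubst_diff finsupp_transvectant finsupp_add
        finsupp_diff) (simp add: algebra_simps)
qed

lemma lsubst_sum: "finite I \<Longrightarrow> (\<And>i. i \<in> I \<Longrightarrow> finsupp (f i)) \<Longrightarrow> lsubst A (sum f I) = (\<Sum>i\<in>I. lsubst A (f i))"
proof (induct I rule: finite_induct)
  case empty then show ?case by simp
next
  case (insert x F) then show ?case by (simp add: lsubst_add finsupp_sum)
qed

lemma finsupp_row_form[simp]: "finsupp (row_form A r)" by (simp add: row_form_def lin_def)
lemma finsupp_row_monom[simp]: "finsupp (row_monom A m)" by (simp add: row_monom_def split: prod.split)

definition mat_mult :: "(nat \<Rightarrow> nat \<Rightarrow> complex) \<Rightarrow> (nat \<Rightarrow> nat \<Rightarrow> complex) \<Rightarrow> nat \<Rightarrow> nat \<Rightarrow> complex" where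
  "mat_mult B A r l = B r 0 * A 0 l + B r 1 * A 1 l + B r 2 * A 2 l"

lemma lsubst_lin: "lsubst A (lin u1 u2 u3) = lin (u1 * A 0 0 + u2 * A 1 0 + u3 * A 2 0)
   (u1 * A 0 1 + u2 * A 1 1 + u3 * A 2 1) (u1 * A 0 2 + u2 * A 1 2 + u3 * A 2 2)"
proof -
  have "lsubst A (lin u1 u2 u3) = const3 u1 * row_form A 0 + const3 u2 * row_form A 1 + const3 u3 * row_form A 2"
    by (simp add: lin_def lsubst_add lsubst_const3_mult)
  then show ?thesis by (simp add: row_form_def lin_def algebra_simps)
qed

lemma lsubst_row_form: "lsubst A (row_form B r) = row_form (mat_mult B A) r"
  by (simp add: row_form_def[of B] lsubst_lin) (simp add: row_form_def mat_mult_def algebra_simps)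

lemma lsubst_row_monom: "lsubst A (row_monom B m) = row_monom (mat_mult B A) m"
  by (simp add: row_monom_def lsubst_mult lsubst_power lsubst_row_form split: prod.split)

lemma lsubst_lsubst: assumes "finsupp F" shows "lsubst A (lsubst B F) = lsubst (mat_mult B A) F"
proof -
  have fin: "finite (support F)" using assms by (simp add: finsupp_def)
  have "lsubst A (lsubst B F) = (\<Sum>m\<in>support F. lsubst A (const3 (coeff3 F m) * row_monom B m))"
    unfolding lsubst_def[of B] by (rule lsubst_sum[OF fin]) simp
  also have "\<dots> = (\<Sum>m\<in>support F. const3 (coeff3 F m) * row_monom (mat_mult B A) m)"
    by (simp only: lsubst_const3_mult[OF finsupp_row_monom] lsubst_row_monom)
  also have "\<dots> = lsubst (mat_mult B A) F" by (simp add: lsubst_def)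
  finally show ?thesis .
qed

definition mat_id :: "nat \<Rightarrow> nat \<Rightarrow> complex" where "mat_id r k = (if r = k then 1 else 0)"

lemma lsubst_mat_id: assumes "finsupp F" shows "lsubst mat_id F = F"
proof -
  have "row_monom mat_id m = mono_ser m" for m by (simp add: row_monom_def row_form_def lin_def mat_id_def mono_ser_def split: prod.split)
  then show ?thesis using finsupp_eq_sum_mono_ser[OF assms] by (simp add: lsubst_def)
qed

lemma row_form_cong: "(\<And>k. k < 3 \<Longrightarrow> A r k = B r k) \<Longrightarrow> row_form A r = row_form B r"
  by (simp add: row_form_def lin_def)

lemma lsubst_cong: assumes "\<And>r k. r < 3 \<Longrightarrow> k < 3 \<Longrightarrow> A r k = B r k" shows "lsubst A F = lsubst B F"
proof -
  have "row_form A r = row_form B r" if "r < 3" for r using assms that by (intro row_form_cong) auto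
  then have "row_monom A m = row_monom B m" for m by (simp add: row_monom_def split: prod.split)
  then show ?thesis by (simp add: lsubst_def)
qed

section \<open>Homogeneous series\<close>

definition homog :: "nat \<Rightarrow> ser3 \<Rightarrow> bool" where
  "homog d F \<longleftrightarrow> (\<forall>m. coeff3 F m \<noteq> 0 \<longrightarrow> mdeg m = d)"

lemma homogD: "homog d F \<Longrightarrow> coeff3 F m \<noteq> 0 \<Longrightarrow> mdeg m = d"
  unfolding homog_def by blast

lemma mdeg0: "mdeg m = 0 \<Longrightarrow> m = (0,0,0)"
  by (cases m) (simp add: mdeg_def)

lemma mdeg1: assumes "mdeg m = 1" shows "m \<in> {(1,0,0),(0,1,0),(0,0,1)}"
proof -
  obtain i j k where m: "m = (i,j,k)" by (cases m) auto
  have "i + j + k = 1" using assms by (simp add: m mdeg_def)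
  then have "(i = 1 \<and> j = 0 \<and> k = 0) \<or> (i = 0 \<and> j = 1 \<and> k = 0) \<or> (i = 0 \<and> j = 0 \<and> k = 1)" by arith
  then show ?thesis by (auto simp: m)
qed

lemma is_form_homog: "is_form d p \<longleftrightarrow> homog d (ser_of p)"
  by (simp add: is_form_def homog_def)

lemma homog_finsupp: assumes "homog d F" shows "finsupp F"
proof -
  have "support F \<subseteq> {..d} \<times> {..d} \<times> {..d}"
  proof
    fix m assume m: "m \<in> support F"
    obtain i j k where mm: "m = (i,j,k)" by (cases m) auto
    have "i + j + k = d" using m assms by (auto simp: support_def homog_def mdeg_def mm)
    then show "m \<in> {..d} \<times> {..d} \<times> {..d}" by (simp add: mm)
  qed
  then show ?thesis unfolding finsupp_def by (rule finite_subset) simp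
qed

lemma homog_add[simp]: "homog d F \<Longrightarrow> homog d G \<Longrightarrow> homog d (F + G)"
  by (auto simp: homog_def) (metis add.right_neutral)

lemma homog_diff[simp]: "homog d F \<Longrightarrow> homog d G \<Longrightarrow> homog d (F - G)"
  by (auto simp: homog_def) (metis diff_self)

lemma homog_neg[simp]: "homog d F \<Longrightarrow> homog d (- F)"
  by (auto simp: homog_def)

lemma homog_const3_mult[simp]: "homog d F \<Longrightarrow> homog d (const3 c * F)"
  by (auto simp: homog_def)

lemma homog_zero[simp]: "homog d 0" by (simp add: homog_def)
lemma homog_const3[simp]: "homog 0 (const3 c)" by (simp add: homog_def mdeg_def)

lemma homog_sum: "(\<And>i. i \<in> I \<Longrightarrow> homog d (f i)) \<Longrightarrow> homog d (sum f I)"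
proof (cases "finite I")
  case True
  assume "\<And>i. i \<in> I \<Longrightarrow> homog d (f i)"
  with True show ?thesis by (induct I rule: finite_induct) simp_all
qed simp

lemma homog_mult[simp]: assumes "homog a F" "homog b G" shows "homog (a + b) (F * G)"
  unfolding homog_def
proof (intro allI impI)
  fix m assume "coeff3 (F * G) m \<noteq> 0"
  then obtain i j k where m: "m = (i,j,k)" and
    "(\<Sum>x\<le>i. \<Sum>y\<le>j. \<Sum>z\<le>k. coeff3 F (x,y,z) * coeff3 G (i-x, j-y, k-z)) \<noteq> 0"
    by (cases m) (auto simp: coeff3_mult pmult_def)
  then obtain x y z where xyz: "x \<le> i" "y \<le> j" "z \<le> k" "coeff3 F (x,y,z) * coeff3 G (i-x, j-y, k-z) \<noteq> 0"
    by (meson atMost_iff sum.neutral)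
  have "mdeg (x,y,z) = a" using xyz(4) by (intro homogD[OF assms(1)]) auto
  moreover have "mdeg (i-x,j-y,k-z) = b" using xyz(4) by (intro homogD[OF assms(2)]) auto
  ultimately show "mdeg m = a + b" using xyz by (simp add: m mdeg_def)
qed

lemma homog_var[simp]: "homog 1 X0" "homog 1 X1" "homog 1 X2"
  by (auto simp: homog_def coeff3_X0 coeff3_X1 coeff3_X2 mdeg_def)

lemma homog_var_Suc[simp]: "homog (Suc 0) X0" "homog (Suc 0) X1" "homog (Suc 0) X2"
  using homog_var by (simp_all add: One_nat_def)

lemma homog_power[simp]: "homog d F \<Longrightarrow> homog (n * d) (F ^ n)"
proof (induct n)
  case 0 then show ?case using homog_const3[of 1] by simp
next
  case (Suc n) then show ?case using homog_mult[of d F "n * d" "F ^ n"] by (simp add: add.commute)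
qed

lemma homog_partial[simp]: assumes "homog d F" shows "homog (d - 1) (partial i F)"
  unfolding homog_def
proof (intro allI impI)
  fix m assume nz: "coeff3 (partial i F) m \<noteq> 0"
  obtain a b c where m: "m = (a,b,c)" by (cases m) auto
  have "coeff3 F (Suc a,b,c) \<noteq> 0 \<or> coeff3 F (a,Suc b,c) \<noteq> 0 \<or> coeff3 F (a,b,Suc c) \<noteq> 0"
    using nz by (auto simp: coeff3_partial pderiv3_def m split: if_splits)
  then show "mdeg m = d - 1"
    using homogD[OF assms, of "(Suc a,b,c)"] homogD[OF assms, of "(a,Suc b,c)"] homogD[OF assms, of "(a,b,Suc c)"]
    by (auto simp: m mdeg_def)
qed

lemma homog_transvectant: "homog a F \<Longrightarrow> homog b G \<Longrightarrow> homog c H \<Longrightarrow>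
   homog ((a - n) + (b - n) + (c - n)) (transvectant n F G H)"
proof (induct n arbitrary: a b c F G H)
  case 0 then show ?case by simp
next
  case (Suc n)
  have "\<And>i j k. homog ((a - Suc n) + (b - Suc n) + (c - Suc n)) (transvectant n (partial i F) (partial j G) (partial k H))"
    using Suc.hyps[OF homog_partial[OF Suc.prems(1)] homog_partial[OF Suc.prems(2)] homog_partial[OF Suc.prems(3)]]
    by (simp add: diff_diff_left)
  then show ?case by simp
qed

lemma homog_row_form[simp]: "homog 1 (row_form A r)" by (simp add: row_form_def lin_def)

lemma homog_row_monom: "homog (mdeg m) (row_monom A m)"
proof -
  obtain i j k where m: "m = (i,j,k)" by (cases m) auto
  have "homog (i * 1 + j * 1 + k * 1) (row_monom A m)" unfolding m row_monom_def prod.case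
    by (intro homog_mult homog_power homog_row_form)
  then show ?thesis by (simp add: m mdeg_def)
qed

lemma homog_lsubst: assumes "homog d F" shows "homog d (lsubst A F)"
  unfolding lsubst_def
proof (rule homog_sum)
  fix m assume "m \<in> support F"
  then have "mdeg m = d" using homogD[OF assms] by (auto simp: support_def)
  then show "homog d (const3 (coeff3 F m) * row_monom A m)" using homog_row_monom[of m A] by simp
qed

lemma homog0_eq_const3: assumes "homog 0 F" shows "F = const3 (coeff3 F (0,0,0))"
proof -
  have "F = (\<Sum>m\<in>{(0,0,0)}. const3 (coeff3 F m) * mono_ser m)"
  proof (rule ser_eq_sum_mono_ser)
    show "support F \<subseteq> {(0,0,0)}"
    proof
      fix m assume "m \<in> support F"
      then have "mdeg m = 0" using homogD[OF assms] by (simp add: support_def)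
      then show "m \<in> {(0,0,0)}" using mdeg0 by simp
    qed
  qed simp
  then show ?thesis by (simp add: mono_ser_def)
qed

lemma homog1_eq_lin: assumes "homog 1 F"
  shows "F = lin (coeff3 F (1,0,0)) (coeff3 F (0,1,0)) (coeff3 F (0,0,1))"
proof -
  have "F = (\<Sum>m\<in>{(1,0,0),(0,1,0),(0,0,1)}. const3 (coeff3 F m) * mono_ser m)"
  proof (rule ser_eq_sum_mono_ser)
    show "support F \<subseteq> {(1,0,0),(0,1,0),(0,0,1)}"
    proof
      fix m assume "m \<in> support F"
      then have "mdeg m = 1" using homogD[OF assms] by (simp add: support_def)
      then show "m \<in> {(1,0,0),(0,1,0),(0,0,1)}" by (rule mdeg1)
    qed
  qed simp
  then show ?thesis by (simp add: lin_def mono_ser_def add.assoc)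
qed

lemma finsupp_lin[simp]: "finsupp (lin u1 u2 u3)" by (simp add: lin_def)
lemma homog_lin[simp]: "homog 1 (lin u1 u2 u3)" by (simp add: lin_def)

section \<open>Covariance of the concomitants\<close>

definition hessian_ser :: "ser3 \<Rightarrow> ser3" where "hessian_ser F = const3 (1/12) * transvectant 2 F F F"
definition Pi_ser :: "ser3 \<Rightarrow> ser3 \<Rightarrow> ser3" where "Pi_ser U F = const3 (1/12) * transvectant 1 (hessian_ser F) F U"
definition Gamma_ser :: "ser3 \<Rightarrow> ser3 \<Rightarrow> ser3" where "Gamma_ser U F = const3 (1/432) * transvectant 3 (Pi_ser U F) F (U * (U * U))"
definition theta_ser :: "ser3 \<Rightarrow> ser3 \<Rightarrow> ser3" where "theta_ser U F = const3 (1/4) * transvectant 2 F F (U * U)"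

definition F6_ser :: "ser3 \<Rightarrow> ser3 \<Rightarrow> complex" where
  "F6_ser U F = (1/3072) * coeff3 (transvectant 2 (theta_ser U F) (theta_ser U F) (U * U)) (0,0,0)"

lemma ser_of_hessian: "ser_of (hessian f) = hessian_ser (ser_of f)"
  by (simp add: hessian_def hessian_ser_def ser_of_transv)

lemma ser_of_Pi_u: "ser_of (Pi_u f u1 u2 u3) = Pi_ser (lin u1 u2 u3) (ser_of f)"
  by (simp add: Pi_u_def Pi_ser_def ser_of_transv ser_of_hessian ser_of_ux)

lemma ser_of_Gamma_u: "ser_of (Gamma_u f u1 u2 u3) = Gamma_ser (lin u1 u2 u3) (ser_of f)"
  by (simp add: Gamma_u_def Gamma_ser_def ser_of_transv ser_of_Pi_u ser_of_ux)

lemma ser_of_theta_u: "ser_of (theta_u f u1 u2 u3) = theta_ser (lin u1 u2 u3) (ser_of f)"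
  by (simp add: theta_u_def theta_ser_def ser_of_transv ser_of_ux)

lemma F6u_val_F6_ser: "F6u_val f u1 u2 u3 = F6_ser (lin u1 u2 u3) (ser_of f)"
proof -
  have "transv 2 (theta_u f u1 u2 u3) (theta_u f u1 u2 u3) (pmult (ux u1 u2 u3) (ux u1 u2 u3)) (0,0,0)
     = coeff3 (ser_of (transv 2 (theta_u f u1 u2 u3) (theta_u f u1 u2 u3) (pmult (ux u1 u2 u3) (ux u1 u2 u3)))) (0,0,0)"
    by simp
  then show ?thesis by (simp add: F6u_val_def F6_ser_def ser_of_transv ser_of_theta_u ser_of_ux)
qed

lemma finsupp_hessian_ser[simp]: "finsupp F \<Longrightarrow> finsupp (hessian_ser F)" by (simp add: hessian_ser_def)
lemma finsupp_Pi_ser[simp]: "finsupp U \<Longrightarrow> finsupp F \<Longrightarrow> finsupp (Pi_ser U F)" by (simp add: Pi_ser_def)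
lemma finsupp_theta_ser[simp]: "finsupp U \<Longrightarrow> finsupp F \<Longrightarrow> finsupp (theta_ser U F)" by (simp add: theta_ser_def)

lemma hessian_ser_lsubst: assumes "finsupp F" shows "hessian_ser (lsubst A F) = const3 (det3 A ^ 2) * lsubst A (hessian_ser F)"
  using assms by (simp add: hessian_ser_def transvectant_lsubst lsubst_const3_mult)

lemma Pi_ser_lsubst: assumes "finsupp F" "finsupp U"
  shows "Pi_ser (lsubst A U) (lsubst A F) = const3 (det3 A ^ 3) * lsubst A (Pi_ser U F)"
proof -
  have "Pi_ser (lsubst A U) (lsubst A F) = const3 (1/12) * (const3 (det3 A ^ 2) * (const3 (det3 A ^ 1) * lsubst A (transvectant 1 (hessian_ser F) F U)))"
    using assms by (simp only: Pi_ser_def hessian_ser_lsubst transvectant_const1 transvectant_lsubst finsupp_hessian_ser)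
  also have "\<dots> = const3 (det3 A ^ 3) * lsubst A (Pi_ser U F)"
    using assms by (simp add: Pi_ser_def lsubst_const3_mult mult_ac power_numeral_reduce)
  finally show ?thesis .
qed

lemma Gamma_ser_lsubst: assumes "finsupp F" "finsupp U"
  shows "Gamma_ser (lsubst A U) (lsubst A F) = const3 (det3 A ^ 6) * lsubst A (Gamma_ser U F)"
proof -
  have "Gamma_ser (lsubst A U) (lsubst A F) = const3 (1/432) * (const3 (det3 A ^ 3) * (const3 (det3 A ^ 3) * lsubst A (transvectant 3 (Pi_ser U F) F (U * (U * U)))))"
    using assms by (simp only: Gamma_ser_def Pi_ser_lsubst lsubst_mult[symmetric] transvectant_const1 transvectant_lsubst finsupp_Pi_ser finsupp_mult)
  also have "\<dots> = const3 (det3 A ^ 6) * lsubst A (Gamma_ser U F)"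
    using assms by (simp add: Gamma_ser_def lsubst_const3_mult mult_ac power_numeral_reduce)
  finally show ?thesis .
qed

lemma theta_ser_lsubst: assumes "finsupp F" "finsupp U"
  shows "theta_ser (lsubst A U) (lsubst A F) = const3 (det3 A ^ 2) * lsubst A (theta_ser U F)"
proof -
  have "theta_ser (lsubst A U) (lsubst A F) = const3 (1/4) * (const3 (det3 A ^ 2) * lsubst A (transvectant 2 F F (U * U)))"
    using assms by (simp only: theta_ser_def lsubst_mult[symmetric] transvectant_lsubst finsupp_mult)
  also have "\<dots> = const3 (det3 A ^ 2) * lsubst A (theta_ser U F)"
    using assms by (simp add: theta_ser_def lsubst_const3_mult mult_ac)
  finally show ?thesis .
qed

lemma F6_ser_lsubst: assumes "homog 3 F" "homog 1 U"
  shows "F6_ser (lsubst A U) (lsubst A F) = det3 A ^ 6 * F6_ser U F"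
proof -
  have fF: "finsupp F" and fU: "finsupp U" using assms homog_finsupp by blast+
  let ?Z = "transvectant 2 (theta_ser U F) (theta_ser U F) (U * U)"
  have hth: "homog 2 (theta_ser U F)"
    using homog_transvectant[OF assms(1) assms(1) homog_mult[OF assms(2) assms(2)], of 2]
    by (simp add: theta_ser_def numeral_2_eq_2)
  have hZ: "homog 0 ?Z"
    using homog_transvectant[OF hth hth homog_mult[OF assms(2) assms(2)], of 2] by simp
  have SZ: "lsubst A ?Z = ?Z" using homog0_eq_const3[OF hZ] by (metis lsubst_const3)
  have "transvectant 2 (theta_ser (lsubst A U) (lsubst A F)) (theta_ser (lsubst A U) (lsubst A F)) (lsubst A U * lsubst A U)
      = const3 (det3 A ^ 2) * (const3 (det3 A ^ 2) * (const3 (det3 A ^ 2) * lsubst A ?Z))"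
    using fF fU by (simp only: theta_ser_lsubst lsubst_mult[symmetric] transvectant_const1 transvectant_const2 transvectant_lsubst finsupp_theta_ser finsupp_mult)
  also have "\<dots> = const3 (det3 A ^ 6) * ?Z"
    unfolding SZ by (simp add: mult_ac power_numeral_reduce)
  finally show ?thesis by (simp add: F6_ser_def)
qed

lemma transvectant1_self: "transvectant 1 F F H = 0"
  by (simp add: One_nat_def algebra_simps)

lemma Pi_ser_eq_0_if_hessian: "hessian_ser F = const3 c * F \<Longrightarrow> Pi_ser U F = 0"
  by (simp add: Pi_ser_def transvectant_const1 transvectant1_self)

section \<open>Cubics in coordinates\<close>

definition cubic :: "complex \<Rightarrow> complex \<Rightarrow> complex \<Rightarrow> complex \<Rightarrow> complex \<Rightarrow> complex \<Rightarrow> complex \<Rightarrow> complex \<Rightarrow> complex \<Rightarrow> complex \<Rightarrow> ser3" where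
  "cubic a300 a210 a201 a120 a111 a102 a030 a021 a012 a003 = const3 a300 * X0^3 + const3 a210 * X0^2*X1 + const3 a201 * X0^2*X2 + const3 a120 * X0*X1^2 + const3 a111 * X0*X1*X2 + const3 a102 * X0*X2^2 + const3 a030 * X1^3 + const3 a021 * X1^2*X2 + const3 a012 * X1*X2^2 + const3 a003 * X2^3"

definition quartic :: "complex \<Rightarrow> complex \<Rightarrow> complex \<Rightarrow> complex \<Rightarrow> complex \<Rightarrow> complex \<Rightarrow> complex \<Rightarrow> complex \<Rightarrow> complex \<Rightarrow> complex \<Rightarrow> complex \<Rightarrow> complex \<Rightarrow> complex \<Rightarrow> complex \<Rightarrow> complex \<Rightarrow> ser3" where
  "quartic p400 p310 p301 p220 p211 p202 p130 p121 p112 p103 p040 p031 p022 p013 p004 = const3 p400 * X0^4 + const3 p310 * X0^3*X1 + const3 p301 * X0^3*X2 + const3 p220 * X0^2*X1^2 + const3 p211 * X0^2*X1*X2 + const3 p202 * X0^2*X2^2 + const3 p130 * X0*X1^3 + const3 p121 * X0*X1^2*X2 + const3 p112 * X0*X1*X2^2 + const3 p103 * X0*X2^3 + const3 p040 * X1^4 + const3 p031 * X1^3*X2 + const3 p022 * X1^2*X2^2 + const3 p013 * X1*X2^3 + const3 p004 * X2^4"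

definition quadratic :: "complex \<Rightarrow> complex \<Rightarrow> complex \<Rightarrow> complex \<Rightarrow> complex \<Rightarrow> complex \<Rightarrow> ser3" where
  "quadratic t200 t110 t101 t020 t011 t002 = const3 t200 * X0^2 + const3 t110 * X0*X1 + const3 t101 * X0*X2 + const3 t020 * X1^2 + const3 t011 * X1*X2 + const3 t002 * X2^2"

lemma cubic_scale: "const3 c * cubic a300 a210 a201 a120 a111 a102 a030 a021 a012 a003 = cubic (c*a300) (c*a210) (c*a201) (c*a120) (c*a111) (c*a102) (c*a030) (c*a021) (c*a012) (c*a003)"
  by (simp add: cubic_def algebra_simps)

lemma quartic_scale: "const3 c * quartic p400 p310 p301 p220 p211 p202 p130 p121 p112 p103 p040 p031 p022 p013 p004 = quartic (c*p400) (c*p310) (c*p301) (c*p220) (c*p211) (c*p202) (c*p130) (c*p121) (c*p112) (c*p103) (c*p040) (c*p031) (c*p022) (c*p013) (c*p004)"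
  by (simp add: quartic_def algebra_simps)

lemma quadratic_scale: "const3 c * quadratic t200 t110 t101 t020 t011 t002 = quadratic (c*t200) (c*t110) (c*t101) (c*t020) (c*t011) (c*t002)"
  by (simp add: quadratic_def algebra_simps)

lemma lin_scale: "const3 c * lin c100 c010 c001 = lin (c*c100) (c*c010) (c*c001)"
  by (simp add: lin_def algebra_simps)

lemma coeff3_lin: "coeff3 (lin x y z) m =
    (if m = (1,0,0) then x else if m = (0,1,0) then y else if m = (0,0,1) then z else 0)"
  by (simp add: lin_def coeff3_X0 coeff3_X1 coeff3_X2)

lemma lin_eq_iff: "lin x y z = lin x' y' z' \<longleftrightarrow> x = x' \<and> y = y' \<and> z = z'"
proof
  assume eq: "lin x y z = lin x' y' z'"
  show "x = x' \<and> y = y' \<and> z = z'"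
    using arg_cong[OF eq, of "\<lambda>F. coeff3 F (1,0,0)"] arg_cong[OF eq, of "\<lambda>F. coeff3 F (0,1,0)"]
      arg_cong[OF eq, of "\<lambda>F. coeff3 F (0,0,1)"]
    by (simp add: coeff3_lin)
qed simp

lemma lin_eq_0_iff: "lin x y z = 0 \<longleftrightarrow> x = 0 \<and> y = 0 \<and> z = 0"
  using lin_eq_iff[of x y z 0 0 0] by (simp add: lin_def)

lemma mdeg3: assumes "mdeg m = 3"
  shows "m \<in> {(3,0,0),(2,1,0),(2,0,1),(1,2,0),(1,1,1),(1,0,2),(0,3,0),(0,2,1),(0,1,2),(0,0,3)}"
proof -
  obtain i j k where m: "m = (i,j,k)" by (cases m) auto
  have s: "i + j + k = 3" using assms by (simp add: m mdeg_def)
  have k: "k = 3 - i - j" using s by arith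
  have "i = 0 \<or> i = 1 \<or> i = 2 \<or> i = 3" "j = 0 \<or> j = 1 \<or> j = 2 \<or> j = 3" using s by arith+
  then show ?thesis using s unfolding m k by (elim disjE) simp_all
qed

lemma homog3_eq_cubic: assumes "homog 3 G"
  shows "G = cubic (coeff3 G (3,0,0)) (coeff3 G (2,1,0)) (coeff3 G (2,0,1)) (coeff3 G (1,2,0)) (coeff3 G (1,1,1))
     (coeff3 G (1,0,2)) (coeff3 G (0,3,0)) (coeff3 G (0,2,1)) (coeff3 G (0,1,2)) (coeff3 G (0,0,3))"
proof -
  let ?M = "{(3,0,0),(2,1,0),(2,0,1),(1,2,0),(1,1,1),(1,0,2),(0,3,0),(0,2,1),(0,1,2),(0,0,3)} :: mono set"
  have "G = (\<Sum>m\<in>?M. const3 (coeff3 G m) * mono_ser m)"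
  proof (rule ser_eq_sum_mono_ser)
    show "support G \<subseteq> ?M"
    proof
      fix m assume "m \<in> support G"
      then have "mdeg m = 3" using homogD[OF assms] by (simp add: support_def)
      then show "m \<in> ?M" by (rule mdeg3)
    qed
  qed simp
  then show ?thesis by (simp add: cubic_def mono_ser_def algebra_simps)
qed

lemma prod3_cubic: "lin s1 t1 u1 * lin s2 t2 u2 * lin s3 t3 u3 = cubic (s1*s2*s3) (s1*s2*t3 + s1*t2*s3 + t1*s2*s3) (s1*s2*u3 + s1*u2*s3 + u1*s2*s3) (s1*t2*t3 + t1*s2*t3 + t1*t2*s3) (s1*t2*u3 + s1*u2*t3 + t1*s2*u3 + t1*u2*s3 + u1*s2*t3 + u1*t2*s3) (s1*u2*u3 + u1*s2*u3 + u1*u2*s3) (t1*t2*t3) (t1*t2*u3 + t1*u2*t3 + u1*t2*t3) (t1*u2*u3 + u1*t2*u3 + u1*u2*t3) (u1*u2*u3)"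
  unfolding cubic_def lin_def by (simp only: const3_mult const3_add, algebra)

lemma xyz_cubic: "X0 * X1 * X2 = cubic 0 0 0 0 1 0 0 0 0 0" by (simp add: cubic_def)

lemma transvectant2_cubic: "transvectant 2 (cubic a300 a210 a201 a120 a111 a102 a030 a021 a012 a003) (cubic a300 a210 a201 a120 a111 a102 a030 a021 a012 a003) (cubic a300 a210 a201 a120 a111 a102 a030 a021 a012 a003) =
  cubic (144*a300*a120*a102 - 36*a300*a111^2 - 48*a210^2*a102 + 48*a210*a201*a111 - 48*a201^2*a120) (144*a300*a120*a012 - 144*a300*a111*a021 + 432*a300*a102*a030 - 48*a210^2*a012 + 96*a210*a201*a021 - 48*a210*a120*a102 + 12*a210*a111^2 - 144*a201^2*a030) (432*a300*a120*a003 - 144*a300*a111*a012 + 144*a300*a102*a021 - 144*a210^2*a003 + 96*a210*a201*a012 - 48*a201^2*a021 - 48*a201*a120*a102 + 12*a201*a111^2) (432*a300*a030*a012 - 144*a300*a021^2 - 48*a210*a120*a012 + 144*a210*a102*a030 + 96*a201*a120*a021 - 144*a201*a111*a030 - 48*a120^2*a102 + 12*a120*a111^2) (1296*a300*a030*a003 - 144*a300*a021*a012 - 144*a210*a120*a003 - 48*a210*a111*a012 + 144*a210*a102*a021 + 144*a201*a120*a012 - 48*a201*a111*a021 - 144*a201*a102*a030 - 48*a120*a111*a102 + 12*a111^3) (432*a300*a021*a003 - 144*a300*a012^2 - 144*a210*a111*a003 + 96*a210*a102*a012 + 144*a201*a120*a003 - 48*a201*a102*a021 - 48*a120*a102^2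 + 12*a111^2*a102) (144*a210*a030*a012 - 48*a210*a021^2 - 48*a120^2*a012 + 48*a120*a111*a021 - 36*a111^2*a030) (432*a210*a030*a003 - 48*a210*a021*a012 + 144*a201*a030*a012 - 48*a201*a021^2 - 144*a120^2*a003 + 96*a120*a102*a021 + 12*a111^2*a021 - 144*a111*a102*a030) (144*a210*a021*a003 - 48*a210*a012^2 + 432*a201*a030*a003 - 48*a201*a021*a012 - 144*a120*a111*a003 + 96*a120*a102*a012 + 12*a111^2*a012 - 144*a102^2*a030) (144*a201*a021*a003 - 48*a201*a012^2 - 36*a111^2*a003 + 48*a111*a102*a012 - 48*a102^2*a021)"
  unfolding cubic_def
  by (simp add: eval_nat_numeral partial_mult partial_power) algebra

lemma transvectant1_cubic_cubic_X2: "transvectant 1 (cubic h300 h210 h201 h120 h111 h102 h030 h021 h012 h003) (cubic a300 a210 a201 a120 a111 a102 a030 a021 a012 a003) X2 = quartic (3*h300*a210 - 3*h210*a300) (6*h300*a120 - 6*h120*a300) (3*h300*a111 - 2*h210*a201 + 2*h201*a210 - 3*h111*a300) (9*h300*a030 + 3*h210*a120 - 3*h120*a210 - 9*h030*a300) (6*h300*a021 + h210*a111 + 4*h201*a120 - 4*h120*a201 - h111*a210 - 6*h021*a300) (3*h300*a012 - h210*a102 + 2*h201*a111 - 2*h111*a201 + h102*a210 - 3*h012*a300) (6*h210*a030 - 6*h030*a210) (4*h210*a021 + 6*h201*a030 - h120*a111 + h111*a120 - 6*h030*a201 - 4*h021*a210) (2*h210*a012 + 4*h201*a021 - 2*h120*a102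 + 2*h102*a120 - 4*h021*a201 - 2*h012*a210) (2*h201*a012 - h111*a102 + h102*a111 - 2*h012*a201) (3*h120*a030 - 3*h030*a120) (2*h120*a021 + 3*h111*a030 - 3*h030*a111 - 2*h021*a120) (h120*a012 + 2*h111*a021 + 3*h102*a030 - 3*h030*a102 - 2*h021*a111 - h012*a120) (h111*a012 + 2*h102*a021 - 2*h021*a102 - h012*a111) (h102*a012 - h012*a102)"
  unfolding cubic_def quartic_def
  by (simp add: partial_mult partial_power) algebra

lemma transvectant3_quartic_cubic_X2_cube: "transvectant 3 (quartic p400 p310 p301 p220 p211 p202 p130 p121 p112 p103 p040 p031 p022 p013 p004) (cubic a300 a210 a201 a120 a111 a102 a030 a021 a012 a003) (X2 * (X2 * X2)) = lin (864*p400*a030 - 216*p310*a120 + 144*p220*a210 - 216*p130*a300) (216*p310*a030 - 144*p220*a120 + 216*p130*a210 - 864*p040*a300) (216*p301*a030 - 72*p211*a120 + 72*p121*a210 - 216*p031*a300)"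
  unfolding cubic_def quartic_def lin_def
  by (simp add: partial_mult partial_power numeral_3_eq_3) algebra

lemma transvectant2_cubic_cubic_X2_square: "transvectant 2 (cubic a300 a210 a201 a120 a111 a102 a030 a021 a012 a003) (cubic a300 a210 a201 a120 a111 a102 a030 a021 a012 a003) (X2 * X2) = quadratic (48*a300*a120 - 16*a210^2) (144*a300*a030 - 16*a210*a120) (48*a300*a021 - 16*a210*a111 + 16*a201*a120) (48*a210*a030 - 16*a120^2) (16*a210*a021 + 48*a201*a030 - 16*a120*a111) (16*a201*a021 - 4*a111^2)"
  unfolding cubic_def quadratic_def
  by (simp add: partial_mult partial_power eval_nat_numeral) algebra

lemma transvectant2_quadratic_quadratic_X2_square: "transvectant 2 (quadratic t200 t110 t101 t020 t011 t002) (quadratic t200 t110 t101 t020 t011 t002) (X2 * X2) = const3 (16*t200*t020 - 4*t110^2)"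
  unfolding quadratic_def
  by (simp add: partial_mult partial_power eval_nat_numeral)

text \<open>One sixteenth of the discriminant of the binary cubic
  \<open>a\<^sub>3\<^sub>0\<^sub>0 x\<^sup>3 + a\<^sub>2\<^sub>1\<^sub>0 x\<^sup>2y + a\<^sub>1\<^sub>2\<^sub>0 xy\<^sup>2 + a\<^sub>0\<^sub>3\<^sub>0 y\<^sup>3\<close>.\<close>

definition bin_disc :: "complex \<Rightarrow> complex \<Rightarrow> complex \<Rightarrow> complex \<Rightarrow> complex" where
  "bin_disc a300 a210 a120 a030 = (- (27/16)*a300^2*a030^2 + (9/8)*a300*a210*a120*a030 - (1/4)*a300*a120^3 - (1/4)*a210^3*a030 + (1/16)*a210^2*a120^2)"

definition Gamma_x :: "complex \<Rightarrow> complex \<Rightarrow> complex \<Rightarrow> complex \<Rightarrow> complex \<Rightarrow> complex \<Rightarrow> complex \<Rightarrow> complex \<Rightarrow> complex \<Rightarrow> complex \<Rightarrow> complex" where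
  "Gamma_x a300 a210 a201 a120 a111 a102 a030 a021 a012 a003 = (- 3*a300^2*a120*a021^2 + 9*a300^2*a111*a030*a021 - 27*a300^2*a102*a030^2 + a300*a210^2*a021^2 - 6*a300*a210*a201*a030*a021 - a300*a210*a120*a111*a021 + 18*a300*a210*a120*a102*a030 - 3*a300*a210*a111^2*a030 + 9*a300*a201^2*a030^2 + 2*a300*a201*a120^2*a021 - 3*a300*a201*a120*a111*a030 - 4*a300*a120^3*a102 + a300*a120^2*a111^2 - 4*a210^3*a102*a030 + 4*a210^2*a201*a111*a030 + a210^2*a120^2*a102 - 4*a210*a201^2*a120*a030 - a210*a201*a120^2*a111 + a201^2*a120^3)"

definition Gamma_y :: "complex \<Rightarrow> complex \<Rightarrow> complex \<Rightarrow> complex \<Rightarrow> complex \<Rightarrow> complex \<Rightarrow> complex \<Rightarrow> complex \<Rightarrow> complex \<Rightarrow> complex \<Rightarrow> complex" where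
  "Gamma_y a300 a210 a201 a120 a111 a102 a030 a021 a012 a003 = (- 27*a300^2*a030^2*a012 + 9*a300^2*a030*a021^2 + 18*a300*a210*a120*a030*a012 - 4*a300*a210*a120*a021^2 - 3*a300*a210*a111*a030*a021 - 6*a300*a201*a120*a030*a021 + 9*a300*a201*a111*a030^2 - 4*a300*a120^3*a012 + 4*a300*a120^2*a111*a021 - 3*a300*a120*a111^2*a030 - 4*a210^3*a030*a012 + a210^3*a021^2 + 2*a210^2*a201*a030*a021 + a210^2*a120^2*a012 - a210^2*a120*a111*a021 + a210^2*a111^2*a030 - 3*a210*a201^2*a030^2 - a210*a201*a120*a111*a030 + a201^2*a120^2*a030)"

definition Gamma_z :: "complex \<Rightarrow> complex \<Rightarrow> complex \<Rightarrow> complex \<Rightarrow> complex \<Rightarrow> complex \<Rightarrow> complex \<Rightarrow> complex \<Rightarrow> complex \<Rightarrow> complex \<Rightarrow> complex" where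
  "Gamma_z a300 a210 a201 a120 a111 a102 a030 a021 a012 a003 = (- 27*a300^2*a030^2*a003 + a300^2*a021^3 + 18*a300*a210*a120*a030*a003 - a300*a210*a111*a021^2 - 2*a300*a201*a120*a021^2 + 3*a300*a201*a111*a030*a021 - 4*a300*a120^3*a003 + a300*a120*a111^2*a021 - a300*a111^3*a030 - 4*a210^3*a030*a003 + a210^2*a201*a021^2 + a210^2*a120^2*a003 - 2*a210*a201^2*a030*a021 - a210*a201*a120*a111*a021 + a210*a201*a111^2*a030 + a201^3*a030^2 + a201^2*a120^2*a021 - a201^2*a120*a111*a030)"

lemma Gamma_ser_cubic: "Gamma_ser X2 (cubic a300 a210 a201 a120 a111 a102 a030 a021 a012 a003) = lin (Gamma_x a300 a210 a201 a120 a111 a102 a030 a021 a012 a003) (Gamma_y a300 a210 a201 a120 a111 a102 a030 a021 a012 a003) (Gamma_z a300 a210 a201 a120 a111 a102 a030 a021 a012 a003)"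
  unfolding Gamma_ser_def Pi_ser_def hessian_ser_def transvectant2_cubic cubic_scale transvectant1_cubic_cubic_X2
    quartic_scale transvectant3_quartic_cubic_X2_cube lin_scale lin_eq_iff
  by (intro conjI) (simp add: Gamma_x_def Gamma_y_def Gamma_z_def, algebra)+

lemma F6_ser_cubic: "F6_ser X2 (cubic a300 a210 a201 a120 a111 a102 a030 a021 a012 a003) = bin_disc a300 a210 a120 a030"
  unfolding F6_ser_def theta_ser_def transvectant2_cubic_cubic_X2_square quadratic_scale
    transvectant2_quadratic_quadratic_X2_square coeff3_const3 if_True
  by (simp add: bin_disc_def, algebra)

lemma Gamma_x_diff: "Gamma_x a300 a210 a201 a120 a111 a102 a030 a021 a012 a003 - Gamma_x a300 a210 a201 a120 a111 b102 a030 a021 b012 b003 = 16 * bin_disc a300 a210 a120 a030 * (a102 - b102)"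
  by (simp add: Gamma_x_def bin_disc_def, algebra)

lemma Gamma_y_diff: "Gamma_y a300 a210 a201 a120 a111 a102 a030 a021 a012 a003 - Gamma_y a300 a210 a201 a120 a111 b102 a030 a021 b012 b003 = 16 * bin_disc a300 a210 a120 a030 * (a012 - b012)"
  by (simp add: Gamma_y_def bin_disc_def, algebra)

lemma Gamma_z_diff: "Gamma_z a300 a210 a201 a120 a111 a102 a030 a021 a012 a003 - Gamma_z a300 a210 a201 a120 a111 b102 a030 a021 b012 b003 = 16 * bin_disc a300 a210 a120 a030 * (a003 - b003)"
  by (simp add: Gamma_z_def bin_disc_def, algebra)

section \<open>Completely reducible cubics\<close>

definition completely_reducible_ser :: "ser3 \<Rightarrow> bool" where
  "completely_reducible_ser F \<longleftrightarrow> (\<exists>L1 L2 L3. homog 1 L1 \<and> homog 1 L2 \<and> homog 1 L3 \<and> F = L1 * L2 * L3)"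

lemma completely_reducible_iff_ser: "completely_reducible f \<longleftrightarrow> completely_reducible_ser (ser_of f)"
proof
  assume "completely_reducible f"
  then obtain l1 l2 l3 where "is_form 1 l1" "is_form 1 l2" "is_form 1 l3" "f = pmult (pmult l1 l2) l3"
    unfolding completely_reducible_def by blast
  then show "completely_reducible_ser (ser_of f)" unfolding completely_reducible_ser_def is_form_homog by auto
next
  assume "completely_reducible_ser (ser_of f)"
  then obtain L1 L2 L3 where L: "homog 1 L1" "homog 1 L2" "homog 1 L3" "ser_of f = L1 * L2 * L3"
    unfolding completely_reducible_ser_def by blast
  have "ser_of f = ser_of (pmult (pmult (coeff3 L1) (coeff3 L2)) (coeff3 L3))" using L(4) by simp
  then have "f = pmult (pmult (coeff3 L1) (coeff3 L2)) (coeff3 L3)" using ser_of_eq_iff by blast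
  moreover have "is_form 1 (coeff3 L1)" "is_form 1 (coeff3 L2)" "is_form 1 (coeff3 L3)"
    using L by (simp_all add: is_form_homog)
  ultimately show "completely_reducible f" unfolding completely_reducible_def by blast
qed

lemma transvectant2_xyz: "transvectant 2 (X0 * X1 * X2) (X0 * X1 * X2) (X0 * X1 * X2) = const3 12 * (X0 * X1 * X2)"
  unfolding xyz_cubic transvectant2_cubic by (simp add: cubic_def)

definition coeff_matrix :: "ser3 \<Rightarrow> ser3 \<Rightarrow> ser3 \<Rightarrow> nat \<Rightarrow> nat \<Rightarrow> complex" where
  "coeff_matrix L1 L2 L3 r k = coeff3 (if r = 0 then L1 else if r = 1 then L2 else L3)
      (if k = 0 then (1,0,0) else if k = 1 then (0,1,0) else (0,0,1))"

lemma row_form_coeff_matrix: assumes "homog 1 L1" "homog 1 L2" "homog 1 L3"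
  shows "row_form (coeff_matrix L1 L2 L3) 0 = L1" "row_form (coeff_matrix L1 L2 L3) 1 = L2" "row_form (coeff_matrix L1 L2 L3) 2 = L3"
    "row_form (coeff_matrix L1 L2 L3) (Suc 0) = L2"
  using homog1_eq_lin[OF assms(1)] homog1_eq_lin[OF assms(2)] homog1_eq_lin[OF assms(3)]
  by (simp_all add: row_form_def lin_def coeff_matrix_def)

lemma hessian_ser_product_of_linear: assumes "homog 1 L1" "homog 1 L2" "homog 1 L3"
  shows "\<exists>c. hessian_ser (L1 * L2 * L3) = const3 c * (L1 * L2 * L3)"
proof -
  let ?A = "coeff_matrix L1 L2 L3"
  let ?W = "X0 * X1 * X2"
  have fW: "finsupp ?W" by simp
  have P: "L1 * L2 * L3 = lsubst ?A ?W"
    by (simp add: lsubst_mult row_form_coeff_matrix[OF assms])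
  have "hessian_ser (L1 * L2 * L3) = const3 (1/12) * (const3 (det3 ?A ^ 2) * lsubst ?A (const3 12 * ?W))"
    unfolding hessian_ser_def P transvectant_lsubst[OF fW fW fW] transvectant2_xyz ..
  also have "\<dots> = (const3 (1/12) * const3 12) * (const3 (det3 ?A ^ 2) * lsubst ?A ?W)"
    unfolding lsubst_const3_mult[OF fW] by (simp only: mult_ac)
  also have "const3 (1/12) * const3 12 = 1" by (subst const3_mult[symmetric]) simp
  finally have "hessian_ser (L1 * L2 * L3) = const3 (det3 ?A ^ 2) * lsubst ?A ?W" by simp
  then show ?thesis unfolding P by blast
qed

lemma hessian_ser_completely_reducible_ser:
  assumes "completely_reducible_ser G" shows "\<exists>c. hessian_ser G = const3 c * G"
proof -
  obtain L1 L2 L3 where L: "homog 1 L1" "homog 1 L2" "homog 1 L3" "G = L1 * L2 * L3"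
    using assms unfolding completely_reducible_ser_def by blast
  show ?thesis unfolding L(4) by (rule hessian_ser_product_of_linear[OF L(1-3)])
qed

lemma Gamma_ser_completely_reducible_ser: assumes "completely_reducible_ser G" shows "Gamma_ser U G = 0"
proof -
  obtain c where "hessian_ser G = const3 c * G" using hessian_ser_completely_reducible_ser[OF assms] by blast
  then have "Pi_ser U G = 0" by (rule Pi_ser_eq_0_if_hessian)
  then show ?thesis by (simp add: Gamma_ser_def)
qed

lemma cubic_has_root: assumes "(a::complex) \<noteq> 0" shows "\<exists>r. a*r^3 + b*r^2 + c*r + d = 0"
proof -
  have "degree [:d, c, b, a:] = 3" using assms by simp
  then have "\<not> constant (poly [:d, c, b, a:])" by (simp add: constant_degree)
  then obtain z where "poly [:d, c, b, a:] z = 0" using fundamental_theorem_of_algebra by blast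
  then show ?thesis by (intro exI[of _ z]) (simp add: algebra_simps power3_eq_cube power2_eq_square)
qed

lemma quadratic_factorization: assumes "(a::complex) \<noteq> 0" shows "\<exists>z1 z2. p = - a * (z1 + z2) \<and> q = a * z1 * z2"
proof -
  let ?w = "csqrt (p^2 - 4*a*q)"
  have w: "?w^2 = p^2 - 4*a*q" by simp
  show ?thesis
    by (rule exI[of _ "(- p + ?w) / (2*a)"], rule exI[of _ "(- p - ?w) / (2*a)"])
      (use assms w in \<open>simp add: field_simps, algebra\<close>)
qed

lemma binary_cubic_splits: assumes "bin_disc a b c d \<noteq> 0"
  shows "\<exists>s1 t1 s2 t2 s3 t3. a = s1*s2*s3 \<and> b = s1*s2*t3 + s1*t2*s3 + t1*s2*s3
    \<and> c = s1*t2*t3 + t1*s2*t3 + t1*t2*s3 \<and> d = t1*t2*t3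
    \<and> s1*t2 - s2*t1 \<noteq> 0 \<and> s1*t3 - s3*t1 \<noteq> 0 \<and> s2*t3 - s3*t2 \<noteq> 0"
proof -
  have "\<exists>s1 t1 s2 t2 s3 t3. a = s1*s2*s3 \<and> b = s1*s2*t3 + s1*t2*s3 + t1*s2*s3
    \<and> c = s1*t2*t3 + t1*s2*t3 + t1*t2*s3 \<and> d = t1*t2*t3"
  proof (cases "a = 0")
    case False
    obtain r where r: "a*r^3 + b*r^2 + c*r + d = 0" using cubic_has_root[OF False] by blast
    obtain z1 z2 where z: "b + a*r = - a * (z1 + z2)" "c + b*r + a*r^2 = a * z1 * z2"
      using quadratic_factorization[OF False] by blast
    \<comment> \<open>the factorization \<open>(x - r y) (a x - a z\<^sub>1 y) (x - z\<^sub>2 y)\<close>\<close>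
    show ?thesis
      by (rule exI[of _ 1], rule exI[of _ "-r"], rule exI[of _ a], rule exI[of _ "-a*z1"],
          rule exI[of _ 1], rule exI[of _ "-z2"]) (insert r z, intro conjI, algebra+)
  next
    case True
    have "b \<noteq> 0" using assms True by (auto simp: bin_disc_def)
    then obtain z1 z2 where z: "c = - b * (z1 + z2)" "d = b * z1 * z2"
      using quadratic_factorization by blast
    show ?thesis
      by (rule exI[of _ 0], rule exI[of _ 1], rule exI[of _ b], rule exI[of _ "-b*z1"],
          rule exI[of _ 1], rule exI[of _ "-z2"]) (use True z in \<open>simp add: algebra_simps\<close>)
  qed
  then obtain s1 t1 s2 t2 s3 t3 where st: "a = s1*s2*s3" "b = s1*s2*t3 + s1*t2*s3 + t1*s2*s3"
    "c = s1*t2*t3 + t1*s2*t3 + t1*t2*s3" "d = t1*t2*t3" by blast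
  have "bin_disc a b c d = (1/16) * ((s1*t2 - s2*t1) * (s1*t3 - s3*t1) * (s2*t3 - s3*t2))^2"
    unfolding st bin_disc_def by algebra
  then have "(s1*t2 - s2*t1) * (s1*t3 - s3*t1) * (s2*t3 - s3*t2) \<noteq> 0" using assms by auto
  then have "s1*t2 - s2*t1 \<noteq> 0" "s1*t3 - s3*t1 \<noteq> 0" "s2*t3 - s3*t2 \<noteq> 0" by auto
  then show ?thesis using st by blast
qed

lemma lagrange_interpolation:
  assumes d: "s1*t2 - s2*t1 \<noteq> 0" "s1*t3 - s3*t1 \<noteq> 0" "s2*t3 - s3*t2 \<noteq> 0"
  shows "\<exists>u1 u2 u3. (q20::complex) = s1*s2*u3 + s1*u2*s3 + u1*s2*s3
     \<and> q11 = s1*t2*u3 + s1*u2*t3 + t1*s2*u3 + t1*u2*s3 + u1*s2*t3 + u1*t2*s3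
     \<and> q02 = t1*t2*u3 + t1*u2*t3 + u1*t2*t3"
proof -
  let ?q = "\<lambda>x y. q20*x^2 + q11*x*y + q02*y^2"
  define e1 where "e1 = (s1*t2 - s2*t1)*(s1*t3 - s3*t1)"
  define e2 where "e2 = - ((s1*t2 - s2*t1)*(s2*t3 - s3*t2))"
  define e3 where "e3 = (s1*t3 - s3*t1)*(s2*t3 - s3*t2)"
  have n: "e1 \<noteq> 0" "e2 \<noteq> 0" "e3 \<noteq> 0"
    using d unfolding e1_def e2_def e3_def by auto
  define u1 where "u1 = ?q t1 (-s1) / e1"
  define u2 where "u2 = ?q t2 (-s2) / e2"
  define u3 where "u3 = ?q t3 (-s3) / e3"
  have h: "u1 * e1 = ?q t1 (-s1)" "u2 * e2 = ?q t2 (-s2)" "u3 * e3 = ?q t3 (-s3)"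
    using n by (simp_all add: u1_def u2_def u3_def)
  have "e1 * e2 * e3 \<noteq> 0" using n by simp
  moreover have "e1 * e2 * e3 * q20 = e1 * e2 * e3 * (s1*s2*u3 + s1*u2*s3 + u1*s2*s3)"
    using h unfolding e1_def e2_def e3_def by algebra
  moreover have "e1 * e2 * e3 * q11 = e1 * e2 * e3 * (s1*t2*u3 + s1*u2*t3 + t1*s2*u3 + t1*u2*s3 + u1*s2*t3 + u1*t2*s3)"
    using h unfolding e1_def e2_def e3_def by algebra
  moreover have "e1 * e2 * e3 * q02 = e1 * e2 * e3 * (t1*t2*u3 + t1*u2*t3 + u1*t2*t3)"
    using h unfolding e1_def e2_def e3_def by algebra
  ultimately show ?thesis by auto
qed

lemma completely_reducible_ser_of_Gamma_ser_X2_zero: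
  assumes hG: "homog 3 G" and nz: "F6_ser X2 G \<noteq> 0" and Ga: "Gamma_ser X2 G = 0"
  shows "completely_reducible_ser G"
proof -
  obtain a300 a210 a201 a120 a111 a102 a030 a021 a012 a003 where
    G: "G = cubic a300 a210 a201 a120 a111 a102 a030 a021 a012 a003"
    using homog3_eq_cubic[OF hG] by blast
  have disc: "bin_disc a300 a210 a120 a030 \<noteq> 0" using nz by (simp add: G F6_ser_cubic)
  have g: "Gamma_x a300 a210 a201 a120 a111 a102 a030 a021 a012 a003 = 0"
    "Gamma_y a300 a210 a201 a120 a111 a102 a030 a021 a012 a003 = 0"
    "Gamma_z a300 a210 a201 a120 a111 a102 a030 a021 a012 a003 = 0"
    using Ga by (simp_all add: G Gamma_ser_cubic lin_eq_0_iff)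
  obtain s1 t1 s2 t2 s3 t3 where st: "a300 = s1*s2*s3" "a210 = s1*s2*t3 + s1*t2*s3 + t1*s2*s3"
    "a120 = s1*t2*t3 + t1*s2*t3 + t1*t2*s3" "a030 = t1*t2*t3"
    and d: "s1*t2 - s2*t1 \<noteq> 0" "s1*t3 - s3*t1 \<noteq> 0" "s2*t3 - s3*t2 \<noteq> 0"
    using binary_cubic_splits[OF disc] by blast
  obtain u1 u2 u3 where uu: "a201 = s1*s2*u3 + s1*u2*s3 + u1*s2*s3"
    "a111 = s1*t2*u3 + s1*u2*t3 + t1*s2*u3 + t1*u2*s3 + u1*s2*t3 + u1*t2*s3"
    "a021 = t1*t2*u3 + t1*u2*t3 + u1*t2*t3"
    using lagrange_interpolation[OF d, of a201 a111 a021] by blast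
  define b102 where "b102 = s1*u2*u3 + u1*s2*u3 + u1*u2*s3"
  define b012 where "b012 = t1*u2*u3 + u1*t2*u3 + u1*u2*t3"
  define b003 where "b003 = u1*u2*u3"
  let ?P = "lin s1 t1 u1 * lin s2 t2 u2 * lin s3 t3 u3"
  have P: "?P = cubic a300 a210 a201 a120 a111 b102 a030 a021 b012 b003"
    unfolding prod3_cubic b102_def b012_def b003_def st uu ..
  have red: "completely_reducible_ser ?P" unfolding completely_reducible_ser_def using homog_lin by blast
  have g': "Gamma_x a300 a210 a201 a120 a111 b102 a030 a021 b012 b003 = 0"
    "Gamma_y a300 a210 a201 a120 a111 b102 a030 a021 b012 b003 = 0"
    "Gamma_z a300 a210 a201 a120 a111 b102 a030 a021 b012 b003 = 0"
    using Gamma_ser_completely_reducible_ser[OF red, of X2] by (simp_all add: P Gamma_ser_cubic lin_eq_0_iff)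
  have "a102 = b102" "a012 = b012" "a003 = b003"
    using Gamma_x_diff[of a300 a210 a201 a120 a111 a102 a030 a021 a012 a003 b102 b012 b003]
      Gamma_y_diff[of a300 a210 a201 a120 a111 a102 a030 a021 a012 a003 b102 b012 b003]
      Gamma_z_diff[of a300 a210 a201 a120 a111 a102 a030 a021 a012 a003 b102 b012 b003]
      g g' disc by simp_all
  then show ?thesis using G P red by simp
qed

definition mat3 :: "complex \<Rightarrow> complex \<Rightarrow> complex \<Rightarrow> complex \<Rightarrow> complex \<Rightarrow> complex \<Rightarrow> complex \<Rightarrow> complex \<Rightarrow> complex \<Rightarrow> nat \<Rightarrow> nat \<Rightarrow> complex" where
  "mat3 a b c d e f g h i = (\<lambda>r k. if r = 0 then (if k = 0 then a else if k = 1 then b else c)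
     else if r = 1 then (if k = 0 then d else if k = 1 then e else f)
     else (if k = 0 then g else if k = 1 then h else i))"

lemma normalizing_substitution:
  assumes "\<not> (u1 = 0 \<and> u2 = 0 \<and> u3 = 0)"
  shows "\<exists>A B. (\<forall>r k. r < 3 \<longrightarrow> k < 3 \<longrightarrow> mat_mult A B r k = mat_id r k) \<and> det3 A \<noteq> 0
     \<and> lsubst A (lin u1 u2 u3) = X2"
proof -
  have lt3: "(r::nat) < 3 \<longleftrightarrow> r = 0 \<or> r = 1 \<or> r = 2" for r by auto
  have X2: "X2 = lin 0 0 1" by (simp add: lin_def)
  \<comment> \<open>\<open>B\<close> has two unit rows and the row \<open>u\<close>, and \<open>A = B\<^sup>-\<^sup>1\<close>, so \<open>u A = (0,0,1)\<close>\<close>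
  consider "u3 \<noteq> 0" | "u2 \<noteq> 0" | "u1 \<noteq> 0" using assms by blast
  then show ?thesis
  proof cases
    case 1
    show ?thesis
      by (rule exI[of _ "mat3 1 0 0 0 1 0 (-u1/u3) (-u2/u3) (1/u3)"], rule exI[of _ "mat3 1 0 0 0 1 0 u1 u2 u3"])
         (use 1 in \<open>auto simp: X2 lsubst_lin lin_eq_iff lt3 mat_mult_def mat_id_def mat3_def det3_def field_simps\<close>)
  next
    case 2
    show ?thesis
      by (rule exI[of _ "mat3 1 0 0 (-u1/u2) (-u3/u2) (1/u2) 0 1 0"], rule exI[of _ "mat3 1 0 0 0 0 1 u1 u2 u3"])
         (use 2 in \<open>auto simp: X2 lsubst_lin lin_eq_iff lt3 mat_mult_def mat_id_def mat3_def det3_def field_simps\<close>)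
  next
    case 3
    show ?thesis
      by (rule exI[of _ "mat3 (-u2/u1) (-u3/u1) (1/u1) 1 0 0 0 1 0"], rule exI[of _ "mat3 0 1 0 0 0 1 u1 u2 u3"])
         (use 3 in \<open>auto simp: X2 lsubst_lin lin_eq_iff lt3 mat_mult_def mat_id_def mat3_def det3_def field_simps\<close>)
  qed
qed

lemma F6_ser_lin_zero: "F6_ser (lin 0 0 0) F = 0"
  by (simp add: F6_ser_def theta_ser_def lin_def)

lemma completely_reducible_ser_of_Gamma_ser_zero:
  assumes F: "homog 3 F" and nz: "F6_ser (lin u1 u2 u3) F \<noteq> 0" and Ga: "Gamma_ser (lin u1 u2 u3) F = 0"
  shows "completely_reducible_ser F"
proof -
  have "\<not> (u1 = 0 \<and> u2 = 0 \<and> u3 = 0)" using nz F6_ser_lin_zero by auto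
  then obtain A B where AB: "\<forall>r k. r < 3 \<longrightarrow> k < 3 \<longrightarrow> mat_mult A B r k = mat_id r k"
    and dA: "det3 A \<noteq> 0" and U: "lsubst A (lin u1 u2 u3) = X2"
    using normalizing_substitution by blast
  have fF: "finsupp F" using F homog_finsupp by blast
  let ?G = "lsubst A F"
  have "F6_ser X2 ?G = det3 A ^ 6 * F6_ser (lin u1 u2 u3) F"
    using F6_ser_lsubst[OF F homog_lin[of u1 u2 u3], of A] U by simp
  then have nzG: "F6_ser X2 ?G \<noteq> 0" using dA nz by simp
  have "Gamma_ser X2 ?G = const3 (det3 A ^ 6) * lsubst A (Gamma_ser (lin u1 u2 u3) F)"
    using Gamma_ser_lsubst[OF fF finsupp_lin[of u1 u2 u3], of A] U by simp
  then have GaG: "Gamma_ser X2 ?G = 0" using Ga by simp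
  obtain L1 L2 L3 where L: "homog 1 L1" "homog 1 L2" "homog 1 L3" "?G = L1 * L2 * L3"
    using completely_reducible_ser_of_Gamma_ser_X2_zero[OF homog_lsubst[OF F] nzG GaG]
    unfolding completely_reducible_ser_def by blast
  have "F = lsubst (mat_mult A B) F"
    using lsubst_mat_id[OF fF] lsubst_cong[of "mat_mult A B" mat_id F] AB by simp
  also have "\<dots> = lsubst B L1 * lsubst B L2 * lsubst B L3"
    using L homog_finsupp by (simp add: lsubst_lsubst[OF fF, symmetric] lsubst_mult)
  finally show ?thesis unfolding completely_reducible_ser_def using L homog_lsubst by blast
qed

theorem lemma8p1:
  fixes f :: pol and u1 u2 u3 :: complex
  assumes "is_form 3 f"
    and "F6u_val f u1 u2 u3 \<noteq> 0"
  shows "(completely_reducible f \<longleftrightarrow> (\<exists>c. hessian f = psmult c f))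
       \<and> ((\<exists>c. hessian f = psmult c f) \<longleftrightarrow> Pi_u f u1 u2 u3 = pzero)
       \<and> (Pi_u f u1 u2 u3 = pzero \<longleftrightarrow> Gamma_u f u1 u2 u3 = pzero)"
proof -
  let ?F = "ser_of f" and ?U = "lin u1 u2 u3"
  have F: "homog 3 ?F" using assms(1) by (simp add: is_form_homog)
  have nz: "F6_ser ?U ?F \<noteq> 0" using assms(2) by (simp add: F6u_val_F6_ser)
  have hessian: "hessian f = psmult c f \<longleftrightarrow> hessian_ser ?F = const3 c * ?F" for c
    unfolding ser_of_eq_iff[symmetric] ser_of_hessian ser_of_psmult ..
  have Pi: "Pi_u f u1 u2 u3 = pzero \<longleftrightarrow> Pi_ser ?U ?F = 0"
    unfolding ser_of_eq_iff[symmetric] ser_of_Pi_u ser_of_pzero ..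
  have Gamma: "Gamma_u f u1 u2 u3 = pzero \<longleftrightarrow> Gamma_ser ?U ?F = 0"
    unfolding ser_of_eq_iff[symmetric] ser_of_Gamma_u ser_of_pzero ..
  have "completely_reducible_ser ?F \<Longrightarrow> \<exists>c. hessian_ser ?F = const3 c * ?F"
    by (rule hessian_ser_completely_reducible_ser)
  moreover have "(\<exists>c. hessian_ser ?F = const3 c * ?F) \<Longrightarrow> Pi_ser ?U ?F = 0"
    using Pi_ser_eq_0_if_hessian by metis
  moreover have "Pi_ser ?U ?F = 0 \<Longrightarrow> Gamma_ser ?U ?F = 0"
    by (simp add: Gamma_ser_def)
  moreover have "Gamma_ser ?U ?F = 0 \<Longrightarrow> completely_reducible_ser ?F"
    using completely_reducible_ser_of_Gamma_ser_zero[OF F nz] .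
  ultimately show ?thesis
    unfolding completely_reducible_iff_ser hessian Pi Gamma by blast
qed

end
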